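(* Let $L>0$, $\Omega=(0,L)$, $m\ge1$, $d_1,\dots,d_m>0$, and consider $$\partial_tu_i-d_i\partial_{xx}u_i=f_i(x,t,u)\ \text{in }\Omega\times(0,T),\qquad\partial_xu_i(0,t)=\partial_xu_i(L,t)=0,\qquad u_i(x,0)=u_{i,0}(x).$$ Assume (A4): there exist a lower triangular $A=(a_{ij})\in\mathbb{R}^{m\times m}$ with non-negative entries and positive diagonal entries, $r\ge1$ and $C>0$ with $\sum_{j=1}^ia_{ij}f_j(x,t,u)\le C(1+\sum_{j=1}^mu_j)^r$ for all $i$, $u\in\mathbb{R}_+^m$, $(x,t)\in\Omega\times\mathbb{R}_+$. Then for every integer $p\ge2$ there exist $\theta=(\theta_1,\dots,\theta_m)\in(0,\infty)^m$, a constant $\alpha_p>0$ (depending on $\theta$ and $p$) and a constant $C>0$ such that, along every non-negative classical solution $u$, $$\frac{d}{dt}\mathscr{E}_p[u]+\alpha_p\sum_{i=1}^m\int_\Omega|\partial_x(u_i^{p/2})|^2dx\le C\Big(1+\sum_{i=1}^m\int_\Omega u_i^{p-1+r}dx\Big).$$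
   Context: For $p\in\mathbb{N}$, $p\ge2$, and $\theta\in(0,\infty)^m$, $\mathscr{E}_p[u]:=\int_\Omega\sum_{\beta\in\mathbb{Z}_+^m,|\beta|=p}\binom{p}{\beta}\theta^{\beta^2}u(x)^\beta\,dx$, where $|\beta|=\beta_1+\dots+\beta_m$, $\binom{p}{\beta}=\frac{p!}{\beta_1!\cdots\beta_m!}$, $\theta^{\beta^2}=\prod_j\theta_j^{\beta_j^2}$, $u^\beta=\prod_ju_j^{\beta_j}$. A classical solution is one with $u_i\in C([0,T];L^q(\Omega))\cap L^\infty\cap C^{1,2}((\tau,T)\times\overline\Omega)$ for all $q>1$, $0<\tau<T$, solving the system a.e. *)

theory Defs
  imports "HOL-Analysis.Analysis"
begin

text \<open>Components are indexed by 0,...,m-1. A vector in R^m is a function nat => real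
  (only the entries below m matter). Multi-indices beta with |beta| = p are functions
  nat => nat vanishing from m on.\<close>

definition multi_indices :: "nat \<Rightarrow> nat \<Rightarrow> (nat \<Rightarrow> nat) set" where
  "multi_indices m p = {\<beta>. (\<forall>j. m \<le> j \<longrightarrow> \<beta> j = 0) \<and> (\<Sum>j<m. \<beta> j) = p}"

definition multinom :: "nat \<Rightarrow> nat \<Rightarrow> (nat \<Rightarrow> nat) \<Rightarrow> real" where
  "multinom m p \<beta> = real (fact p) / (\<Prod>j<m. real (fact (\<beta> j)))"

definition energy ::
  "nat \<Rightarrow> nat \<Rightarrow> (nat \<Rightarrow> real) \<Rightarrow> real \<Rightarrow> (nat \<Rightarrow> real \<Rightarrow> real \<Rightarrow> real) \<Rightarrow> real \<Rightarrow> real" where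
  "energy m p \<theta> L u t = integral {0..L} (\<lambda>x.
     \<Sum>\<beta>\<in>multi_indices m p. multinom m p \<beta> * (\<Prod>j<m. \<theta> j ^ ((\<beta> j)\<^sup>2)) * (\<Prod>j<m. u j x t ^ \<beta> j))"

definition classical_solution ::
  "real \<Rightarrow> nat \<Rightarrow> (nat \<Rightarrow> real) \<Rightarrow> (nat \<Rightarrow> real \<Rightarrow> real \<Rightarrow> (nat \<Rightarrow> real) \<Rightarrow> real) \<Rightarrow> real
   \<Rightarrow> (nat \<Rightarrow> real \<Rightarrow> real) \<Rightarrow> (nat \<Rightarrow> real \<Rightarrow> real \<Rightarrow> real) \<Rightarrow> bool" where
  "classical_solution L m d f T u0 u \<longleftrightarrow>
     (\<forall>i<m.
        \<comment> \<open>u_i in C([0,T]; L^q(Omega)) for all q > 1\<close>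
        (\<forall>q>1. \<forall>t\<in>{0..T}. set_integrable lborel {0..L} (\<lambda>x. \<bar>u i x t\<bar> powr q)) \<and>
        (\<forall>q>1. \<forall>t0\<in>{0..T}.
           ((\<lambda>t. LINT x:{0..L}|lborel. \<bar>u i x t - u i x t0\<bar> powr q) \<longlongrightarrow> 0) (at t0 within {0..T})) \<and>
        \<comment> \<open>u_i in L^infinity(Omega x (0,T))\<close>
        (\<exists>M. \<forall>x\<in>{0..L}. \<forall>t\<in>{0<..<T}. \<bar>u i x t\<bar> \<le> M) \<and>
        \<comment> \<open>initial datum\<close>
        (AE x in lborel. x \<in> {0..L} \<longrightarrow> u i x 0 = u0 i x)) \<and>
     (\<exists>ut ux uxx. \<forall>i<m.
        \<comment> \<open>C^{1,2}((tau,T) x closure Omega) for all 0 < tau < T\<close>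
        continuous_on ({0..L} \<times> {0<..<T}) (\<lambda>z. u i (fst z) (snd z)) \<and>
        continuous_on ({0..L} \<times> {0<..<T}) (\<lambda>z. ut i (fst z) (snd z)) \<and>
        continuous_on ({0..L} \<times> {0<..<T}) (\<lambda>z. ux i (fst z) (snd z)) \<and>
        continuous_on ({0..L} \<times> {0<..<T}) (\<lambda>z. uxx i (fst z) (snd z)) \<and>
        (\<forall>x\<in>{0..L}. \<forall>t\<in>{0<..<T}.
           ((\<lambda>s. u i x s) has_real_derivative ut i x t) (at t) \<and>
           ((\<lambda>y. u i y t) has_real_derivative ux i x t) (at x within {0..L}) \<and>
           ((\<lambda>y. ux i y t) has_real_derivative uxx i x t) (at x within {0..L})) \<and>
        \<comment> \<open>homogeneous Neumann boundary conditions\<close>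
        (\<forall>t\<in>{0<..<T}. ux i 0 t = 0 \<and> ux i L t = 0) \<and>
        \<comment> \<open>the equation holds a.e. in Omega x (0,T)\<close>
        (AE z in lborel. z \<in> {0<..<L} \<times> {0<..<T} \<longrightarrow>
           ut i (fst z) (snd z) - d i * uxx i (fst z) (snd z)
             = f i (fst z) (snd z) (\<lambda>j. u j (fst z) (snd z))))"

end

theory Submission
  imports Defs
begin

text \<open>Write the energy as \<open>\<integral> \<Phi>(u)\<close> with the form
  \<open>\<Phi>(v) = \<Sum>\<^bsub>|\<beta>| = p\<^esub> (p choose \<beta>) \<theta>\<^bsup>\<beta>\<^sup>2\<^esup> v\<^sup>\<beta>\<close>. Differentiating in time, using the equation and
  integrating the diffusion part by parts (Neumann conditions) gives
  \<open>d/dt \<integral> \<Phi>(u) = \<integral> \<Sum>\<^sub>i f\<^sub>i \<partial>\<^sub>i\<Phi>(u) - \<integral> \<Sum>\<^sub>i\<^sub>j d\<^sub>i \<partial>\<^sub>i\<partial>\<^sub>j\<Phi>(u) \<partial>\<^sub>xu\<^sub>i \<partial>\<^sub>xu\<^sub>j\<close>.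
  Because of the weights \<open>\<theta>\<^bsup>\<beta>\<^sup>2\<^esup>\<close>, the Hessian of \<open>\<Phi>\<close> carries an extra factor \<open>\<theta>\<^sub>i\<^sup>2\<close> on the
  diagonal, so for large \<open>\<theta>\<close> the diffusion form dominates \<open>p (p - 1) \<Sum>\<^sub>i u\<^sub>i\<^bsup>p-2\<^esup> |\<partial>\<^sub>xu\<^sub>i|\<^sup>2\<close>,
  i.e. the gradients of the \<open>u\<^sub>i\<^bsup>p/2\<^esup>\<close>. In the reaction part, the weights
  \<open>(\<theta>\<^sub>i\<^bsup>2\<gamma>\<^sub>i+1\<^esup>)\<^sub>i\<close> in front of the \<open>f\<^sub>i\<close> at each monomial \<open>u\<^sup>\<gamma>\<close> of \<open>\<partial>\<^sub>i\<Phi>(u)\<close> form a nonnegative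
  combination of the rows of the triangular matrix \<open>A\<close>, provided \<open>\<theta>\<^sub>i\<close> grows fast enough from the
  last component to the first; then (A4) bounds that part by \<open>C (1 + \<Sum> u)\<^bsup>p-1+r\<^esup>\<close>.\<close>

section \<open>Homogeneous polynomials in multi-index notation\<close>

definition monomial :: "nat \<Rightarrow> (nat \<Rightarrow> nat) \<Rightarrow> (nat \<Rightarrow> real) \<Rightarrow> real" where
  "monomial m \<beta> v = (\<Prod>j<m. v j ^ \<beta> j)"

definition hom_poly :: "nat \<Rightarrow> nat \<Rightarrow> ((nat \<Rightarrow> nat) \<Rightarrow> real) \<Rightarrow> (nat \<Rightarrow> real) \<Rightarrow> real" where
  "hom_poly m n a v = (\<Sum>\<beta>\<in>multi_indices m n. a \<beta> * monomial m \<beta> v)"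

text \<open>If \<open>a\<close> are the coefficients of a form of degree \<open>n + 1\<close>, then \<open>partial_coeffs i a\<close>
  are those of its partial derivative in the \<open>i\<close>-th variable, a form of degree \<open>n\<close>.\<close>
definition partial_coeffs :: "nat \<Rightarrow> ((nat \<Rightarrow> nat) \<Rightarrow> real) \<Rightarrow> (nat \<Rightarrow> nat) \<Rightarrow> real" where
  "partial_coeffs i a \<gamma> = real (Suc (\<gamma> i)) * a (\<gamma>(i := Suc (\<gamma> i)))"

lemma multi_indices_le: "\<beta> \<in> multi_indices m n \<Longrightarrow> \<beta> j \<le> n"
  by (cases "j < m") (auto simp: multi_indices_def intro: order_trans[OF member_le_sum])

lemma finite_multi_indices: "finite (multi_indices m n)"
proof (rule finite_subset)
  show "multi_indices m n \<subseteq> {\<beta>. \<forall>j. (j \<in> {..<m} \<longrightarrow> \<beta> j \<in> {..n}) \<and> (j \<notin> {..<m} \<longrightarrow> \<beta> j = 0)}"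
    by (auto simp: multi_indices_le) (auto simp: multi_indices_def)
  show "finite {\<beta>. \<forall>j. (j \<in> {..<m} \<longrightarrow> \<beta> j \<in> {..n}) \<and> (j \<notin> {..<m} \<longrightarrow> \<beta> j = (0::nat))}"
    by (rule finite_set_of_finite_funs) auto
qed

lemma prod_lessThan_fun_upd:
  fixes F :: "nat \<Rightarrow> nat \<Rightarrow> 'a::comm_monoid_mult"
  assumes "i < m"
  shows "(\<Prod>j<m. F j ((\<gamma>(i := k)) j)) = F i k * (\<Prod>j\<in>{..<m} - {i}. F j (\<gamma> j))"
proof -
  have "(\<Prod>j<m. F j ((\<gamma>(i := k)) j)) = F i k * (\<Prod>j\<in>{..<m} - {i}. F j ((\<gamma>(i := k)) j))"
    using assms by (subst prod.remove[of _ i]) auto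
  also have "(\<Prod>j\<in>{..<m} - {i}. F j ((\<gamma>(i := k)) j)) = (\<Prod>j\<in>{..<m} - {i}. F j (\<gamma> j))"
    by (rule prod.cong) auto
  finally show ?thesis .
qed

lemma sum_lessThan_fun_upd:
  fixes \<beta> :: "nat \<Rightarrow> nat"
  assumes "i < m"
  shows "(\<Sum>j<m. (\<beta>(i := k)) j) + \<beta> i = (\<Sum>j<m. \<beta> j) + k"
proof -
  have "(\<Sum>j<m. (\<beta>(i := k)) j) = k + (\<Sum>j\<in>{..<m} - {i}. \<beta> j)"
    using assms by (subst sum.remove[of _ i]) (auto intro!: sum.cong)
  moreover have "(\<Sum>j<m. \<beta> j) = \<beta> i + (\<Sum>j\<in>{..<m} - {i}. \<beta> j)"
    using assms by (subst sum.remove[of _ i]) auto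
  ultimately show ?thesis by simp
qed

lemma bij_betw_increment_multi_indices:
  assumes "i < m"
  shows "bij_betw (\<lambda>\<gamma>. \<gamma>(i := Suc (\<gamma> i))) (multi_indices m n)
           {\<beta> \<in> multi_indices m (Suc n). 1 \<le> \<beta> i}"
proof (rule bij_betw_byWitness[where f' = "\<lambda>\<beta>. \<beta>(i := \<beta> i - 1)"])
  show "\<forall>\<gamma>\<in>multi_indices m n. (\<gamma>(i := Suc (\<gamma> i)))(i := (\<gamma>(i := Suc (\<gamma> i))) i - 1) = \<gamma>"
    by auto
  show "\<forall>\<beta>\<in>{\<beta> \<in> multi_indices m (Suc n). 1 \<le> \<beta> i}. (\<beta>(i := \<beta> i - 1))(i := Suc ((\<beta>(i := \<beta> i - 1)) i)) = \<beta>"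
    by auto
  show "(\<lambda>\<gamma>. \<gamma>(i := Suc (\<gamma> i))) ` multi_indices m n \<subseteq> {\<beta> \<in> multi_indices m (Suc n). 1 \<le> \<beta> i}"
  proof (rule image_subsetI)
    fix \<gamma> assume "\<gamma> \<in> multi_indices m n"
    moreover have "(\<Sum>j<m. (\<gamma>(i := Suc (\<gamma> i))) j) + \<gamma> i = (\<Sum>j<m. \<gamma> j) + Suc (\<gamma> i)"
      by (rule sum_lessThan_fun_upd[OF assms])
    ultimately show "\<gamma>(i := Suc (\<gamma> i)) \<in> {\<beta> \<in> multi_indices m (Suc n). 1 \<le> \<beta> i}"
      using assms by (auto simp: multi_indices_def)
  qed
  show "(\<lambda>\<beta>. \<beta>(i := \<beta> i - 1)) ` {\<beta> \<in> multi_indices m (Suc n). 1 \<le> \<beta> i} \<subseteq> multi_indices m n"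
  proof (rule image_subsetI, clarify)
    fix \<beta> assume "\<beta> \<in> multi_indices m (Suc n)" "1 \<le> \<beta> i"
    moreover have "(\<Sum>j<m. (\<beta>(i := \<beta> i - 1)) j) + \<beta> i = (\<Sum>j<m. \<beta> j) + (\<beta> i - 1)"
      by (rule sum_lessThan_fun_upd[OF assms])
    ultimately show "\<beta>(i := \<beta> i - 1) \<in> multi_indices m n"
      using assms by (auto simp: multi_indices_def)
  qed
qed

lemma has_real_derivative_prod_within:
  fixes g :: "nat \<Rightarrow> real \<Rightarrow> real"
  assumes "\<And>j. j \<in> I \<Longrightarrow> (g j has_real_derivative g' j) (at s within S)"
  shows "((\<lambda>s. \<Prod>j\<in>I. g j s) has_real_derivative (\<Sum>i\<in>I. g' i * (\<Prod>j\<in>I - {i}. g j s)))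
           (at s within S)"
proof -
  have "((\<lambda>s. \<Prod>j\<in>I. g j s) has_derivative (\<lambda>y. \<Sum>i\<in>I. (g' i * y) * (\<Prod>j\<in>I - {i}. g j s)))
          (at s within S)"
    using assms by (intro has_derivative_prod) (auto simp: has_field_derivative_def)
  moreover have "(\<lambda>y. \<Sum>i\<in>I. (g' i * y) * (\<Prod>j\<in>I - {i}. g j s)) = (*) (\<Sum>i\<in>I. g' i * (\<Prod>j\<in>I - {i}. g j s))"
    by (auto simp: sum_distrib_left sum_distrib_right mult_ac)
  ultimately show ?thesis
    by (simp add: has_field_derivative_def)
qed

lemma monomial_has_real_derivative:
  fixes w :: "nat \<Rightarrow> real \<Rightarrow> real"
  assumes "\<And>j. j < m \<Longrightarrow> (w j has_real_derivative w' j) (at s within S)"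
  shows "((\<lambda>s. monomial m \<beta> (\<lambda>j. w j s)) has_real_derivative
           (\<Sum>i<m. w' i * (real (\<beta> i) * monomial m (\<beta>(i := \<beta> i - 1)) (\<lambda>j. w j s))))
           (at s within S)"
proof -
  have "((\<lambda>s. monomial m \<beta> (\<lambda>j. w j s)) has_real_derivative
     (\<Sum>i<m. (real (\<beta> i) * w i s ^ (\<beta> i - 1) * w' i) * (\<Prod>j\<in>{..<m} - {i}. w j s ^ \<beta> j)))
     (at s within S)"
    unfolding monomial_def using assms
    by (intro has_real_derivative_prod_within) (auto intro!: derivative_eq_intros)
  moreover have "monomial m (\<beta>(i := \<beta> i - 1)) (\<lambda>j. w j s)
      = w i s ^ (\<beta> i - 1) * (\<Prod>j\<in>{..<m} - {i}. w j s ^ \<beta> j)" if "i < m" for i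
    unfolding monomial_def using prod_lessThan_fun_upd[OF that, of "\<lambda>j k. w j s ^ k"] .
  ultimately show ?thesis
    by (elim DERIV_cong) (auto intro!: sum.cong)
qed

lemma hom_poly_has_real_derivative:
  fixes w :: "nat \<Rightarrow> real \<Rightarrow> real"
  assumes "\<And>j. j < m \<Longrightarrow> (w j has_real_derivative w' j) (at s within S)"
  shows "((\<lambda>s. hom_poly m (Suc n) a (\<lambda>j. w j s)) has_real_derivative
           (\<Sum>i<m. w' i * hom_poly m n (partial_coeffs i a) (\<lambda>j. w j s))) (at s within S)"
proof -
  define T where "T \<beta> i = real (\<beta> i) * monomial m (\<beta>(i := \<beta> i - 1)) (\<lambda>j. w j s)" for \<beta> i
  have "((\<lambda>s. hom_poly m (Suc n) a (\<lambda>j. w j s)) has_real_derivative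
     (\<Sum>\<beta>\<in>multi_indices m (Suc n). a \<beta> * (\<Sum>i<m. w' i * T \<beta> i))) (at s within S)"
    unfolding hom_poly_def T_def by (intro DERIV_sum DERIV_cmult monomial_has_real_derivative assms)
  moreover have "(\<Sum>\<beta>\<in>multi_indices m (Suc n). a \<beta> * T \<beta> i) = hom_poly m n (partial_coeffs i a) (\<lambda>j. w j s)"
    if i: "i < m" for i
  proof -
    have "(\<Sum>\<beta>\<in>multi_indices m (Suc n). a \<beta> * T \<beta> i)
        = (\<Sum>\<beta>\<in>{\<beta> \<in> multi_indices m (Suc n). 1 \<le> \<beta> i}. a \<beta> * T \<beta> i)"
      by (rule sum.mono_neutral_right) (auto simp: finite_multi_indices T_def)
    also have "\<dots> = (\<Sum>\<gamma>\<in>multi_indices m n. a (\<gamma>(i := Suc (\<gamma> i))) * T (\<gamma>(i := Suc (\<gamma> i))) i)"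
      by (rule sum.reindex_bij_betw[OF bij_betw_increment_multi_indices[OF i], symmetric])
    also have "\<dots> = hom_poly m n (partial_coeffs i a) (\<lambda>j. w j s)"
      unfolding hom_poly_def partial_coeffs_def T_def by (intro sum.cong) auto
    finally show ?thesis .
  qed
  moreover have "(\<Sum>\<beta>\<in>multi_indices m (Suc n). a \<beta> * (\<Sum>i<m. w' i * T \<beta> i))
      = (\<Sum>i<m. w' i * (\<Sum>\<beta>\<in>multi_indices m (Suc n). a \<beta> * T \<beta> i))"
    unfolding sum_distrib_left by (rule sum.swap[THEN trans]) (simp add: mult_ac)
  ultimately show ?thesis
    by (elim DERIV_cong) (auto intro!: sum.cong)
qed

lemma continuous_on_hom_poly [continuous_intros]:
  assumes "\<And>j. j < m \<Longrightarrow> continuous_on S (F j)"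
  shows "continuous_on S (\<lambda>z. hom_poly m k a (\<lambda>j. F j z))"
  unfolding hom_poly_def monomial_def using assms by (intro continuous_intros) auto

lemma monomial_nonneg: "(\<And>j. j < m \<Longrightarrow> 0 \<le> v j) \<Longrightarrow> 0 \<le> monomial m \<beta> v"
  unfolding monomial_def by (intro prod_nonneg) auto

lemma monomial_le_power_sum:
  assumes v: "\<And>j. j < m \<Longrightarrow> 0 \<le> v j" and \<beta>: "\<beta> \<in> multi_indices m n"
  shows "monomial m \<beta> v \<le> (1 + (\<Sum>j<m. v j)) ^ n"
proof -
  have "monomial m \<beta> v \<le> (\<Prod>j<m. (1 + (\<Sum>j<m. v j)) ^ \<beta> j)"
    unfolding monomial_def
  proof (rule prod_mono)
    fix j assume j: "j \<in> {..<m}"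
    have "v j \<le> (\<Sum>j<m. v j)" using j v by (intro member_le_sum) auto
    then show "0 \<le> v j ^ \<beta> j \<and> v j ^ \<beta> j \<le> (1 + (\<Sum>j<m. v j)) ^ \<beta> j"
      using v j by (auto intro: power_mono)
  qed
  also have "\<dots> = (1 + (\<Sum>j<m. v j)) ^ (\<Sum>j<m. \<beta> j)"
    by (simp add: power_sum)
  also have "\<dots> = (1 + (\<Sum>j<m. v j)) ^ n"
    using \<beta> by (simp add: multi_indices_def)
  finally show ?thesis .
qed

section \<open>The energy density\<close>

definition theta_power :: "nat \<Rightarrow> (nat \<Rightarrow> real) \<Rightarrow> (nat \<Rightarrow> nat) \<Rightarrow> real" where
  "theta_power m \<theta> \<beta> = (\<Prod>j<m. \<theta> j ^ (\<beta> j)\<^sup>2)"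

definition energy_coeffs :: "nat \<Rightarrow> nat \<Rightarrow> (nat \<Rightarrow> real) \<Rightarrow> (nat \<Rightarrow> nat) \<Rightarrow> real" where
  "energy_coeffs m p \<theta> \<beta> = multinom m p \<beta> * theta_power m \<theta> \<beta>"

lemma energy_eq_integral_hom_poly:
  "energy m p \<theta> L u t = integral {0..L} (\<lambda>x. hom_poly m p (energy_coeffs m p \<theta>) (\<lambda>j. u j x t))"
  unfolding energy_def hom_poly_def energy_coeffs_def theta_power_def monomial_def by (simp add: mult_ac)

lemma multinom_pos: "0 < multinom m n \<beta>"
  unfolding multinom_def by (intro divide_pos_pos prod_pos) auto

lemma theta_power_ge_one: "(\<And>j. j < m \<Longrightarrow> 1 \<le> \<theta> j) \<Longrightarrow> 1 \<le> theta_power m \<theta> \<beta>"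
  unfolding theta_power_def by (intro prod_ge_1) auto

lemma energy_coeffs_pos: "(\<And>j. j < m \<Longrightarrow> 1 \<le> \<theta> j) \<Longrightarrow> 0 < energy_coeffs m p \<theta> \<beta>"
  unfolding energy_coeffs_def using multinom_pos theta_power_ge_one
  by (metis dual_order.strict_trans1 mult_pos_pos zero_less_one)

lemma theta_power_increment:
  assumes "i < m"
  shows "theta_power m \<theta> (\<gamma>(i := Suc (\<gamma> i))) = theta_power m \<theta> \<gamma> * \<theta> i ^ (2 * \<gamma> i + 1)"
proof -
  have "theta_power m \<theta> (\<gamma>(i := Suc (\<gamma> i)))
      = \<theta> i ^ (Suc (\<gamma> i))\<^sup>2 * (\<Prod>j\<in>{..<m} - {i}. \<theta> j ^ (\<gamma> j)\<^sup>2)"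
    unfolding theta_power_def by (rule prod_lessThan_fun_upd[OF assms, where F = "\<lambda>j k. \<theta> j ^ k\<^sup>2"])
  moreover have "theta_power m \<theta> \<gamma> = \<theta> i ^ (\<gamma> i)\<^sup>2 * (\<Prod>j\<in>{..<m} - {i}. \<theta> j ^ (\<gamma> j)\<^sup>2)"
    unfolding theta_power_def using assms by (intro prod.remove) auto
  moreover have "(Suc (\<gamma> i))\<^sup>2 = (\<gamma> i)\<^sup>2 + (2 * \<gamma> i + 1)"
    by (simp add: power2_eq_square)
  ultimately show ?thesis
    by (simp add: power_add mult_ac)
qed

lemma multinom_increment:
  assumes "i < m"
  shows "real (Suc (\<gamma> i)) * multinom m (Suc n) (\<gamma>(i := Suc (\<gamma> i))) = real (Suc n) * multinom m n \<gamma>"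
proof -
  define R where "R = (\<Prod>j\<in>{..<m} - {i}. real (fact (\<gamma> j)))"
  define X where "X = real (fact (\<gamma> i)) * R"
  have "(\<Prod>j<m. real (fact ((\<gamma>(i := Suc (\<gamma> i))) j))) = real (fact (Suc (\<gamma> i))) * R"
    unfolding R_def by (rule prod_lessThan_fun_upd[OF assms, where F = "\<lambda>j k. real (fact k)"])
  then have upd: "(\<Prod>j<m. real (fact ((\<gamma>(i := Suc (\<gamma> i))) j))) = real (Suc (\<gamma> i)) * X"
    unfolding X_def by (simp add: algebra_simps)
  have old: "(\<Prod>j<m. real (fact (\<gamma> j))) = X"
    unfolding X_def R_def using assms by (intro prod.remove) auto
  have "real (Suc (\<gamma> i)) * multinom m (Suc n) (\<gamma>(i := Suc (\<gamma> i))) = real (fact (Suc n)) / X"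
    unfolding multinom_def upd by simp
  also have "\<dots> = real (Suc n) * multinom m n \<gamma>"
    unfolding multinom_def old by (simp add: algebra_simps)
  finally show ?thesis .
qed

lemma partial_coeffs_energy_coeffs_mult:
  assumes "i < m"
  shows "partial_coeffs i (\<lambda>\<beta>. energy_coeffs m (Suc n) \<theta> \<beta> * E \<beta>) \<gamma>
    = real (Suc n) * energy_coeffs m n \<theta> \<gamma> * \<theta> i ^ (2 * \<gamma> i + 1) * E (\<gamma>(i := Suc (\<gamma> i)))"
  using multinom_increment[OF assms, of \<gamma> n] theta_power_increment[OF assms, of \<theta> \<gamma>]
  unfolding partial_coeffs_def energy_coeffs_def by (simp add: mult_ac)

lemma partial_coeffs_energy_coeffs:
  assumes "i < m"
  shows "partial_coeffs i (energy_coeffs m (Suc n) \<theta>) \<gamma>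
    = real (Suc n) * energy_coeffs m n \<theta> \<gamma> * \<theta> i ^ (2 * \<gamma> i + 1)"
  using partial_coeffs_energy_coeffs_mult[OF assms, where E = "\<lambda>_. 1"] by simp

lemma partial_coeffs_cmult: "partial_coeffs i (\<lambda>\<beta>. c * a \<beta>) = (\<lambda>\<gamma>. c * partial_coeffs i a \<gamma>)"
  by (auto simp: partial_coeffs_def)

lemma partial_coeffs_energy_coeffs_twice:
  assumes "i < m" "j < m"
  shows "partial_coeffs j (partial_coeffs i (energy_coeffs m (Suc (Suc n)) \<theta>)) \<delta>
    = real (Suc (Suc n)) * real (Suc n) * energy_coeffs m n \<theta> \<delta>
      * \<theta> j ^ (2 * \<delta> j + 1) * \<theta> i ^ (2 * (\<delta>(j := Suc (\<delta> j))) i + 1)"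
proof -
  have "partial_coeffs i (energy_coeffs m (Suc (Suc n)) \<theta>)
      = (\<lambda>\<gamma>. real (Suc (Suc n)) * (energy_coeffs m (Suc n) \<theta> \<gamma> * \<theta> i ^ (2 * \<gamma> i + 1)))"
    using partial_coeffs_energy_coeffs[OF assms(1)] by (simp add: fun_eq_iff mult_ac)
  then show ?thesis
    by (simp add: partial_coeffs_cmult partial_coeffs_energy_coeffs_mult[OF assms(2)] mult_ac)
qed

section \<open>Triangular systems and the choice of the weights\<close>

function back_subst :: "nat \<Rightarrow> (nat \<Rightarrow> nat \<Rightarrow> real) \<Rightarrow> (nat \<Rightarrow> real) \<Rightarrow> nat \<Rightarrow> real" where
  "back_subst m A c i =
     (if i < m then (c i - (\<Sum>k\<in>{i<..<m}. A k i * back_subst m A c k)) / A i i else 0)"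
  by auto
termination
  by (relation "Wellfounded.measure (\<lambda>(m, A, c, i). m - i)") auto

declare back_subst.simps [simp del]

lemma back_subst_eq:
  assumes "i < m" "0 < A i i"
  shows "back_subst m A c i * A i i = c i - (\<Sum>k\<in>{i<..<m}. A k i * back_subst m A c k)"
  using assms by (subst back_subst.simps) simp

lemma back_subst_solves:
  assumes "j < m" "0 < A j j"
  shows "(\<Sum>i\<in>{j..<m}. back_subst m A c i * A i j) = c j"
proof -
  have "{j..<m} = insert j {j<..<m}"
    using assms by auto
  then show ?thesis
    using back_subst_eq[of j m A c] assms by (simp add: mult_ac)
qed

lemma back_subst_bounds:
  assumes A_diag: "\<And>i. i < m \<Longrightarrow> 0 < A i i"
    and A_nonneg: "\<And>i j. i < m \<Longrightarrow> j < m \<Longrightarrow> 0 \<le> A i j"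
    and dominant: "\<And>i. i < m \<Longrightarrow> (\<Sum>k\<in>{i<..<m}. A k i * (c k / A k k)) \<le> c i"
    and "i < m"
  shows "0 \<le> back_subst m A c i \<and> back_subst m A c i \<le> c i / A i i"
  using \<open>i < m\<close>
proof (induction "m - i" arbitrary: i rule: less_induct)
  case less
  let ?S = "\<Sum>k\<in>{i<..<m}. A k i * back_subst m A c k"
  have IH: "0 \<le> back_subst m A c k \<and> back_subst m A c k \<le> c k / A k k" if "k \<in> {i<..<m}" for k
    using less.hyps[of k] that by auto
  have "?S \<le> (\<Sum>k\<in>{i<..<m}. A k i * (c k / A k k))"
    using IH A_nonneg less.prems by (intro sum_mono mult_left_mono) auto
  moreover have "0 \<le> ?S"
    using IH A_nonneg less.prems by (intro sum_nonneg mult_nonneg_nonneg) auto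
  ultimately have "0 \<le> back_subst m A c i * A i i \<and> back_subst m A c i * A i i \<le> c i"
    using back_subst_eq[of i m A c] less.prems A_diag[OF less.prems] dominant[OF less.prems] by auto
  then show ?case
    using A_diag[OF less.prems] by (simp add: zero_le_mult_iff pos_le_divide_eq)
qed

text \<open>The weights \<open>c\<close> are a nonnegative combination \<open>back_subst m A c\<close> of the rows of \<open>A\<close>,
  so the row bounds can be combined.\<close>
lemma lower_triangular_weighted_sum_le:
  fixes g c :: "nat \<Rightarrow> real"
  assumes A_diag: "\<And>i. i < m \<Longrightarrow> 0 < A i i"
    and A_nonneg: "\<And>i j. i < m \<Longrightarrow> j < m \<Longrightarrow> 0 \<le> A i j"
    and dominant: "\<And>i. i < m \<Longrightarrow> (\<Sum>k\<in>{i<..<m}. A k i * (c k / A k k)) \<le> c i"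
    and rows: "\<And>i. i < m \<Longrightarrow> (\<Sum>j\<le>i. A i j * g j) \<le> B" and "0 \<le> B"
  shows "(\<Sum>j<m. c j * g j) \<le> (\<Sum>i<m. c i / A i i) * B"
proof -
  let ?w = "back_subst m A c"
  note bounds = back_subst_bounds[OF A_diag A_nonneg dominant]
  have "(\<Sum>j<m. c j * g j) = (\<Sum>j<m. (\<Sum>i\<in>{j..<m}. ?w i * A i j) * g j)"
    using back_subst_solves A_diag by (intro sum.cong) auto
  also have "\<dots> = (\<Sum>j<m. \<Sum>i | i \<in> {..<m} \<and> j \<le> i. ?w i * A i j * g j)"
    by (intro sum.cong) (auto simp: sum_distrib_right intro!: sum.cong)
  also have "\<dots> = (\<Sum>i<m. \<Sum>j | j \<in> {..<m} \<and> j \<le> i. ?w i * A i j * g j)"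
    by (rule sum.swap_restrict) auto
  also have "\<dots> = (\<Sum>i<m. ?w i * (\<Sum>j\<le>i. A i j * g j))"
    by (intro sum.cong) (auto simp: sum_distrib_left mult_ac intro!: sum.cong)
  also have "\<dots> \<le> (\<Sum>i<m. c i / A i i * B)"
    using bounds rows \<open>0 \<le> B\<close>
    by (intro sum_mono order_trans[OF mult_left_mono mult_right_mono]) auto
  also have "\<dots> = (\<Sum>i<m. c i / A i i) * B"
    by (simp add: sum_distrib_right)
  finally show ?thesis .
qed

definition theta_base :: "nat \<Rightarrow> (nat \<Rightarrow> nat \<Rightarrow> real) \<Rightarrow> (nat \<Rightarrow> real) \<Rightarrow> real" where
  "theta_base m A d =
     2 + (\<Sum>i<m. \<Sum>k<m. A k i / A k k) + (real m * (\<Sum>k<m. d k) + 1) * (\<Sum>k<m. 1 / d k)"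

text \<open>With \<open>N = 2 (n + 2)\<close> and \<open>\<theta>\<^sub>i = B\<^bsup>N\<^bsup>m-i\<^esup>\<^esup>\<close>, every \<open>\<theta>\<^sub>k\<^bsup>2\<gamma>\<^sub>k+1\<^esup>\<close> with \<open>k > i\<close>
  and \<open>|\<gamma>| \<le> n + 1\<close> is at most \<open>\<theta>\<^sub>i / B\<close>, so \<open>B\<close> only has to exceed the column sums of
  \<open>A\<^sub>k\<^sub>i / A\<^sub>k\<^sub>k\<close>.\<close>
definition theta_choice :: "nat \<Rightarrow> nat \<Rightarrow> (nat \<Rightarrow> nat \<Rightarrow> real) \<Rightarrow> (nat \<Rightarrow> real) \<Rightarrow> nat \<Rightarrow> real" where
  "theta_choice m n A d i = theta_base m A d ^ ((2 * Suc (Suc n)) ^ (m - i))"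

context
  fixes m :: nat and A :: "nat \<Rightarrow> nat \<Rightarrow> real" and d :: "nat \<Rightarrow> real"
  assumes A_diag: "\<And>i. i < m \<Longrightarrow> 0 < A i i"
    and A_nonneg: "\<And>i j. i < m \<Longrightarrow> j < m \<Longrightarrow> 0 \<le> A i j"
    and d_pos: "\<And>i. i < m \<Longrightarrow> 0 < d i"
begin

lemma theta_base_ge_two: "2 \<le> theta_base m A d"
  and theta_base_ge_column: "i < m \<Longrightarrow> (\<Sum>k\<in>{i<..<m}. A k i / A k k) \<le> theta_base m A d"
  and theta_base_ge_diffusion: "i < m \<Longrightarrow> (real m * (\<Sum>k<m. d k) + 1) / d i \<le> theta_base m A d"
proof -
  have cols: "0 \<le> (\<Sum>k<m. A k i / A k k)" if "i < m" for i
    using A_diag A_nonneg that by (intro sum_nonneg divide_nonneg_nonneg) (auto intro: less_imp_le)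
  have diff: "0 \<le> (real m * (\<Sum>k<m. d k) + 1) * (\<Sum>k<m. 1 / d k)"
    using d_pos by (intro mult_nonneg_nonneg sum_nonneg add_nonneg_nonneg) (auto intro: less_imp_le)
  have colsum: "0 \<le> (\<Sum>i<m. \<Sum>k<m. A k i / A k k)"
    by (rule sum_nonneg) (use cols in auto)
  show "2 \<le> theta_base m A d"
    unfolding theta_base_def using colsum diff by simp
  assume i: "i < m"
  have "(\<Sum>k\<in>{i<..<m}. A k i / A k k) \<le> (\<Sum>k<m. A k i / A k k)"
    using A_diag A_nonneg i by (intro sum_mono2) (auto intro: less_imp_le)
  also have "\<dots> \<le> (\<Sum>i<m. \<Sum>k<m. A k i / A k k)"
    using i cols by (intro member_le_sum) auto
  finally show "(\<Sum>k\<in>{i<..<m}. A k i / A k k) \<le> theta_base m A d"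
    unfolding theta_base_def using diff by simp
  have "1 / d i \<le> (\<Sum>k<m. 1 / d k)"
    using i d_pos by (intro member_le_sum) (auto intro: less_imp_le)
  then have "(real m * (\<Sum>k<m. d k) + 1) * (1 / d i) \<le> (real m * (\<Sum>k<m. d k) + 1) * (\<Sum>k<m. 1 / d k)"
    using d_pos by (intro mult_left_mono add_nonneg_nonneg mult_nonneg_nonneg sum_nonneg) (auto intro: less_imp_le)
  then show "(real m * (\<Sum>k<m. d k) + 1) / d i \<le> theta_base m A d"
    unfolding theta_base_def using colsum by simp
qed

lemma theta_base_le_theta_choice: "theta_base m A d \<le> theta_choice m n A d i"
proof -
  have "theta_base m A d ^ 1 \<le> theta_base m A d ^ ((2 * Suc (Suc n)) ^ (m - i))"
    using theta_base_ge_two by (intro power_increasing) auto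
  then show ?thesis
    unfolding theta_choice_def by simp
qed

lemma theta_choice_ge_one: "1 \<le> theta_choice m n A d i"
  using theta_base_le_theta_choice theta_base_ge_two by (meson dual_order.trans one_le_numeral)

lemma theta_choice_diffusion:
  assumes "i < m"
  shows "real m * (\<Sum>k<m. d k) + 1 \<le> d i * ((theta_choice m n A d i)\<^sup>2 - 1)"
proof -
  let ?B = "theta_base m A d"
  have "?B \<le> ?B\<^sup>2 - 1"
  proof -
    have "2 * ?B \<le> ?B * ?B"
      using theta_base_ge_two by (intro mult_right_mono) auto
    then show ?thesis
      using theta_base_ge_two unfolding power2_eq_square by linarith
  qed
  also have "?B\<^sup>2 \<le> (theta_choice m n A d i)\<^sup>2"
    using theta_base_le_theta_choice theta_base_ge_two by (intro power_mono) auto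
  finally have "?B \<le> (theta_choice m n A d i)\<^sup>2 - 1"
    by simp
  moreover have "real m * (\<Sum>k<m. d k) + 1 \<le> d i * ?B"
    using theta_base_ge_diffusion[OF assms] d_pos[OF assms] by (simp add: divide_le_eq mult.commute)
  ultimately show ?thesis
    using d_pos[OF assms] by (meson mult_left_mono less_imp_le order_trans)
qed

lemma theta_choice_power_le:
  assumes \<gamma>: "\<gamma> \<in> multi_indices m (Suc n)" and "i < k" "k < m"
  shows "theta_base m A d * theta_choice m n A d k ^ (2 * \<gamma> k + 1) \<le> theta_choice m n A d i"
proof -
  let ?B = "theta_base m A d" and ?N = "2 * Suc (Suc n)"
  let ?X = "?B ^ (?N ^ (m - Suc i) * (?N - 1))"
  have B: "1 \<le> ?B"
    using theta_base_ge_two by simp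
  have "theta_choice m n A d k ^ (2 * \<gamma> k + 1) \<le> theta_choice m n A d k ^ (?N - 1)"
    using theta_choice_ge_one multi_indices_le[OF \<gamma>, of k] by (intro power_increasing) auto
  also have "\<dots> = ?B ^ (?N ^ (m - k) * (?N - 1))"
    unfolding theta_choice_def by (rule power_mult[symmetric])
  also have "\<dots> \<le> ?X"
    using \<open>i < k\<close> B by (intro power_increasing mult_right_mono) auto
  finally have "?B * theta_choice m n A d k ^ (2 * \<gamma> k + 1) \<le> ?B ^ (?N ^ (m - Suc i)) * ?X"
    using B order_trans[OF zero_le_one theta_choice_ge_one]
    by (intro mult_mono) (auto simp: power_increasing[of 1, simplified])
  also have "\<dots> = theta_choice m n A d i"
  proof -
    have exponent: "?N ^ (m - i) = ?N ^ (m - Suc i) + ?N ^ (m - Suc i) * (?N - 1)"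
      using \<open>i < k\<close> \<open>k < m\<close> by (simp add: Suc_diff_Suc[symmetric] algebra_simps)
    show ?thesis
      unfolding theta_choice_def exponent power_add ..
  qed
  finally show ?thesis .
qed

lemma theta_choice_dominant:
  assumes \<gamma>: "\<gamma> \<in> multi_indices m (Suc n)" and i: "i < m"
  shows "(\<Sum>k\<in>{i<..<m}. A k i * (theta_choice m n A d k ^ (2 * \<gamma> k + 1) / A k k))
           \<le> theta_choice m n A d i ^ (2 * \<gamma> i + 1)"
proof -
  let ?B = "theta_base m A d" and ?\<theta> = "theta_choice m n A d"
  have "0 < ?B"
    using theta_base_ge_two by simp
  have "(\<Sum>k\<in>{i<..<m}. A k i * (?\<theta> k ^ (2 * \<gamma> k + 1) / A k k))
      \<le> (\<Sum>k\<in>{i<..<m}. A k i / A k k * (?\<theta> i / ?B))"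
  proof (rule sum_mono)
    fix k assume k: "k \<in> {i<..<m}"
    have "0 \<le> A k i / A k k"
      using A_diag A_nonneg k i by (simp add: less_imp_le)
    moreover have "?\<theta> k ^ (2 * \<gamma> k + 1) \<le> ?\<theta> i / ?B"
      using theta_choice_power_le[OF \<gamma>, of i k] k \<open>0 < ?B\<close> by (simp add: pos_le_divide_eq mult.commute)
    ultimately show "A k i * (?\<theta> k ^ (2 * \<gamma> k + 1) / A k k) \<le> A k i / A k k * (?\<theta> i / ?B)"
      using mult_left_mono by fastforce
  qed
  also have "\<dots> = (\<Sum>k\<in>{i<..<m}. A k i / A k k) * (?\<theta> i / ?B)"
    by (rule sum_distrib_right[symmetric])
  also have "\<dots> \<le> ?B * (?\<theta> i / ?B)"
    using theta_base_ge_column[OF i] \<open>0 < ?B\<close> order_trans[OF zero_le_one theta_choice_ge_one]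
    by (intro mult_right_mono) auto
  also have "\<dots> = ?\<theta> i"
    using \<open>0 < ?B\<close> by simp
  also have "\<dots> \<le> ?\<theta> i ^ (2 * \<gamma> i + 1)"
    using power_increasing[of 1 "2 * \<gamma> i + 1" "?\<theta> i"] theta_choice_ge_one by simp
  finally show ?thesis .
qed

end

section \<open>Pointwise estimates of the reaction and diffusion terms\<close>

definition reaction_constant :: "nat \<Rightarrow> nat \<Rightarrow> (nat \<Rightarrow> nat \<Rightarrow> real) \<Rightarrow> (nat \<Rightarrow> real) \<Rightarrow> real" where
  "reaction_constant m n A \<theta> = (\<Sum>\<gamma>\<in>multi_indices m (Suc n).
     real (Suc (Suc n)) * energy_coeffs m (Suc n) \<theta> \<gamma> * (\<Sum>i<m. \<theta> i ^ (2 * \<gamma> i + 1) / A i i))"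

lemma reaction_constant_nonneg:
  assumes "\<And>i. i < m \<Longrightarrow> 0 < A i i" "\<And>i. i < m \<Longrightarrow> 1 \<le> \<theta> i"
  shows "0 \<le> reaction_constant m n A \<theta>"
  unfolding reaction_constant_def using assms energy_coeffs_pos[of m \<theta>]
  by (intro sum_nonneg mult_nonneg_nonneg divide_nonneg_nonneg)
     (auto intro: less_imp_le order_trans[OF zero_le_one] simp del: power_Suc)

lemma reaction_term_le:
  assumes A_diag: "\<And>i. i < m \<Longrightarrow> 0 < A i i"
    and A_nonneg: "\<And>i j. i < m \<Longrightarrow> j < m \<Longrightarrow> 0 \<le> A i j"
    and dominant: "\<And>\<gamma> i. \<gamma> \<in> multi_indices m (Suc n) \<Longrightarrow> i < m \<Longrightarrow>
       (\<Sum>k\<in>{i<..<m}. A k i * (\<theta> k ^ (2 * \<gamma> k + 1) / A k k)) \<le> \<theta> i ^ (2 * \<gamma> i + 1)"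
    and rows: "\<And>i. i < m \<Longrightarrow> (\<Sum>j\<le>i. A i j * g j) \<le> B" and B: "0 \<le> B"
    and v: "\<And>j. j < m \<Longrightarrow> 0 \<le> v j" and \<theta>: "\<And>j. j < m \<Longrightarrow> 1 \<le> \<theta> j"
  shows "(\<Sum>i<m. g i * hom_poly m (Suc n) (partial_coeffs i (energy_coeffs m (Suc (Suc n)) \<theta>)) v)
           \<le> reaction_constant m n A \<theta> * B * (1 + (\<Sum>j<m. v j)) ^ Suc n"
proof -
  let ?K = "\<lambda>\<gamma>. real (Suc (Suc n)) * energy_coeffs m (Suc n) \<theta> \<gamma>"
  let ?w = "\<lambda>\<gamma> i. \<theta> i ^ (2 * \<gamma> i + 1)"
  let ?S = "\<lambda>\<gamma>. \<Sum>i<m. ?w \<gamma> i / A i i"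
  have K: "0 \<le> ?K \<gamma>" for \<gamma>
    using energy_coeffs_pos[of m \<theta>] \<theta> by (simp add: less_imp_le)
  have S: "0 \<le> ?S \<gamma>" for \<gamma>
    using \<theta> A_diag by (intro sum_nonneg divide_nonneg_nonneg) (auto intro: less_imp_le order_trans[OF zero_le_one] simp del: power_Suc)
  have "(\<Sum>i<m. g i * hom_poly m (Suc n) (partial_coeffs i (energy_coeffs m (Suc (Suc n)) \<theta>)) v)
      = (\<Sum>i<m. \<Sum>\<gamma>\<in>multi_indices m (Suc n). ?K \<gamma> * monomial m \<gamma> v * (?w \<gamma> i * g i))"
    unfolding hom_poly_def
    by (intro sum.cong refl) (simp add: partial_coeffs_energy_coeffs sum_distrib_left mult_ac)
  also have "\<dots> = (\<Sum>\<gamma>\<in>multi_indices m (Suc n). ?K \<gamma> * monomial m \<gamma> v * (\<Sum>i<m. ?w \<gamma> i * g i))"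
    by (subst sum.swap) (simp add: sum_distrib_left)
  also have "\<dots> \<le> (\<Sum>\<gamma>\<in>multi_indices m (Suc n). ?K \<gamma> * (1 + (\<Sum>j<m. v j)) ^ Suc n * (?S \<gamma> * B))"
  proof (rule sum_mono)
    fix \<gamma> assume \<gamma>: "\<gamma> \<in> multi_indices m (Suc n)"
    have "(\<Sum>i<m. ?w \<gamma> i * g i) \<le> ?S \<gamma> * B"
      by (rule lower_triangular_weighted_sum_le[OF A_diag A_nonneg dominant[OF \<gamma>] rows B])
    then have "?K \<gamma> * monomial m \<gamma> v * (\<Sum>i<m. ?w \<gamma> i * g i) \<le> ?K \<gamma> * monomial m \<gamma> v * (?S \<gamma> * B)"
      using K monomial_nonneg[of m v \<gamma>] v by (intro mult_left_mono) auto
    also have "\<dots> \<le> ?K \<gamma> * (1 + (\<Sum>j<m. v j)) ^ Suc n * (?S \<gamma> * B)"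
      using monomial_le_power_sum[OF v \<gamma>] K S B by (intro mult_right_mono mult_left_mono) auto
    finally show "?K \<gamma> * monomial m \<gamma> v * (\<Sum>i<m. ?w \<gamma> i * g i) \<le> \<dots>" .
  qed
  also have "\<dots> = reaction_constant m n A \<theta> * B * (1 + (\<Sum>j<m. v j)) ^ Suc n"
    unfolding reaction_constant_def by (simp add: sum_distrib_left sum_distrib_right mult_ac)
  finally show ?thesis .
qed

lemma powr_one_plus_sum_le:
  fixes v :: "nat \<Rightarrow> real"
  assumes v: "\<And>j. j < m \<Longrightarrow> 0 \<le> v j" and "0 < q"
  shows "(1 + (\<Sum>j<m. v j)) powr q \<le> (real m + 1) powr q * (1 + (\<Sum>j<m. v j powr q))"
proof -
  define M where "M = Max (insert 1 (v ` {..<m}))"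
  have M: "1 \<le> M" "\<And>j. j < m \<Longrightarrow> v j \<le> M"
    unfolding M_def by auto
  have "1 + (\<Sum>j<m. v j) \<le> (real m + 1) * M"
    using sum_mono[of "{..<m}" v "\<lambda>_. M"] M by (simp add: algebra_simps)
  moreover have "0 \<le> (\<Sum>j<m. v j)"
    using v by (intro sum_nonneg) auto
  ultimately have "(1 + (\<Sum>j<m. v j)) powr q \<le> ((real m + 1) * M) powr q"
    using \<open>0 < q\<close> by (intro powr_mono2) auto
  also have "\<dots> = (real m + 1) powr q * M powr q"
    using M by (simp add: powr_mult)
  also have "M powr q \<le> 1 + (\<Sum>j<m. v j powr q)"
  proof -
    have "M \<in> insert 1 (v ` {..<m})"
      unfolding M_def by (intro Max_in) auto
    then consider "M = 1" | j where "j < m" "M = v j"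
      by auto
    then show ?thesis
    proof cases
      case 2
      then have "v j powr q \<le> (\<Sum>j<m. v j powr q)"
        by (intro member_le_sum) auto
      then show ?thesis
        using 2 by simp
    qed (simp add: sum_nonneg)
  qed
  then have "(real m + 1) powr q * M powr q \<le> (real m + 1) powr q * (1 + (\<Sum>j<m. v j powr q))"
    by (intro mult_left_mono) auto
  finally show ?thesis .
qed

lemma reaction_term_le_powr:
  assumes A_diag: "\<And>i. i < m \<Longrightarrow> 0 < A i i"
    and A_nonneg: "\<And>i j. i < m \<Longrightarrow> j < m \<Longrightarrow> 0 \<le> A i j"
    and dominant: "\<And>\<gamma> i. \<gamma> \<in> multi_indices m (Suc n) \<Longrightarrow> i < m \<Longrightarrow>
       (\<Sum>k\<in>{i<..<m}. A k i * (\<theta> k ^ (2 * \<gamma> k + 1) / A k k)) \<le> \<theta> i ^ (2 * \<gamma> i + 1)"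
    and rows: "\<And>i. i < m \<Longrightarrow> (\<Sum>j\<le>i. A i j * g j) \<le> C * (1 + (\<Sum>j<m. v j)) powr r"
    and "0 \<le> C" "0 \<le> r"
    and v: "\<And>j. j < m \<Longrightarrow> 0 \<le> v j" and \<theta>: "\<And>j. j < m \<Longrightarrow> 1 \<le> \<theta> j"
  defines "q \<equiv> real (Suc (Suc n)) - 1 + r"
  shows "(\<Sum>i<m. g i * hom_poly m (Suc n) (partial_coeffs i (energy_coeffs m (Suc (Suc n)) \<theta>)) v)
           \<le> reaction_constant m n A \<theta> * C * (real m + 1) powr q * (1 + (\<Sum>j<m. v j powr q))"
proof -
  let ?S = "1 + (\<Sum>j<m. v j)"
  have "0 < ?S"
    using v by (auto intro!: add_pos_nonneg sum_nonneg)
  have "?S powr q = ?S powr (r + real (Suc n))"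
    by (simp add: q_def add.commute)
  also have "\<dots> = ?S powr r * ?S ^ Suc n"
    using \<open>0 < ?S\<close> by (simp only: powr_add powr_realpow)
  finally have S_powr: "?S powr q = ?S powr r * ?S ^ Suc n" .
  have "(\<Sum>i<m. g i * hom_poly m (Suc n) (partial_coeffs i (energy_coeffs m (Suc (Suc n)) \<theta>)) v)
      \<le> reaction_constant m n A \<theta> * (C * ?S powr r) * ?S ^ Suc n"
    using \<open>0 \<le> C\<close> by (intro reaction_term_le A_diag A_nonneg dominant rows v \<theta>) auto
  also have "\<dots> = reaction_constant m n A \<theta> * C * ?S powr q"
    by (simp add: S_powr mult_ac)
  also have "\<dots> \<le> reaction_constant m n A \<theta> * C * ((real m + 1) powr q * (1 + (\<Sum>j<m. v j powr q)))"
  proof (rule mult_left_mono)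
    have "0 < q"
      using \<open>0 \<le> r\<close> by (simp add: q_def)
    then show "?S powr q \<le> (real m + 1) powr q * (1 + (\<Sum>j<m. v j powr q))"
      by (rule powr_one_plus_sum_le[rotated]) (rule v)
    have "0 \<le> reaction_constant m n A \<theta>"
      by (rule reaction_constant_nonneg) (use A_diag \<theta> in auto)
    then show "0 \<le> reaction_constant m n A \<theta> * C"
      using \<open>0 \<le> C\<close> by simp
  qed
  finally show ?thesis
    by (simp add: mult_ac)
qed

lemma quadratic_form_diagonally_dominant:
  fixes d e \<eta> :: "nat \<Rightarrow> real"
  assumes d: "\<And>i. i < m \<Longrightarrow> 0 \<le> d i" "\<And>i. i < m \<Longrightarrow> d i \<le> dM"
    and e: "\<And>i. i < m \<Longrightarrow> real m * dM + 1 \<le> e i"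
  shows "(\<Sum>i<m. (\<eta> i)\<^sup>2) \<le> (\<Sum>i<m. \<Sum>j<m. d i * (\<eta> i * \<eta> j)) + (\<Sum>i<m. e i * (\<eta> i)\<^sup>2)"
proof -
  have pair: "- (dM * ((\<eta> i)\<^sup>2 + (\<eta> j)\<^sup>2) / 2) \<le> d i * (\<eta> i * \<eta> j)" if "i < m" for i j
  proof -
    have "0 \<le> d i * (\<eta> i + \<eta> j)\<^sup>2"
      using d that by simp
    then have "0 \<le> d i * ((\<eta> i)\<^sup>2 + (\<eta> j)\<^sup>2) + 2 * (d i * (\<eta> i * \<eta> j))"
      by (simp add: power2_sum algebra_simps)
    moreover have "d i * ((\<eta> i)\<^sup>2 + (\<eta> j)\<^sup>2) \<le> dM * ((\<eta> i)\<^sup>2 + (\<eta> j)\<^sup>2)"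
      using d that by (intro mult_right_mono) auto
    ultimately show ?thesis
      by linarith
  qed
  have "- (real m * dM * (\<Sum>i<m. (\<eta> i)\<^sup>2)) = (\<Sum>i<m. \<Sum>j<m. - (dM * ((\<eta> i)\<^sup>2 + (\<eta> j)\<^sup>2) / 2))"
    by (simp add: sum.distrib sum_divide_distrib[symmetric] sum_distrib_left[symmetric] sum_negf algebra_simps)
  also have "\<dots> \<le> (\<Sum>i<m. \<Sum>j<m. d i * (\<eta> i * \<eta> j))"
    using pair by (intro sum_mono) auto
  finally have "- (real m * dM * (\<Sum>i<m. (\<eta> i)\<^sup>2)) \<le> (\<Sum>i<m. \<Sum>j<m. d i * (\<eta> i * \<eta> j))" .
  moreover have "(\<Sum>i<m. (real m * dM + 1) * (\<eta> i)\<^sup>2) \<le> (\<Sum>i<m. e i * (\<eta> i)\<^sup>2)"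
    using e by (intro sum_mono mult_right_mono) auto
  ultimately show ?thesis
    by (simp add: sum.distrib sum_distrib_left algebra_simps)
qed

lemma power_le_hom_poly_energy_coeffs:
  assumes i: "i < m" and v: "\<And>j. j < m \<Longrightarrow> 0 \<le> v j" and \<theta>: "\<And>j. j < m \<Longrightarrow> 1 \<le> \<theta> j"
  shows "v i ^ n \<le> hom_poly m n (energy_coeffs m n \<theta>) v"
proof -
  let ?e = "\<lambda>j. if j = i then n else 0"
  have e: "?e \<in> multi_indices m n"
    using i by (simp add: multi_indices_def sum.delta)
  have "(\<Prod>j<m. real (fact (?e j))) = (\<Prod>j<m. if j = i then real (fact n) else 1)"
    by (rule prod.cong) auto
  then have "multinom m n ?e = 1"
    using i by (simp add: multinom_def)
  moreover have "(\<Prod>j<m. v j ^ ?e j) = (\<Prod>j<m. if j = i then v i ^ n else 1)"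
    by (rule prod.cong) auto
  then have "monomial m ?e v = v i ^ n"
    using i by (simp add: monomial_def)
  moreover have "1 \<le> theta_power m \<theta> ?e"
    by (rule theta_power_ge_one) (rule \<theta>)
  ultimately have "v i ^ n \<le> energy_coeffs m n \<theta> ?e * monomial m ?e v"
    using v[OF i] by (simp add: energy_coeffs_def mult_le_cancel_right1)
  also have "\<dots> \<le> hom_poly m n (energy_coeffs m n \<theta>) v"
    unfolding hom_poly_def using e v energy_coeffs_pos[OF \<theta>]
    by (intro member_le_sum finite_multi_indices mult_nonneg_nonneg monomial_nonneg) (auto intro: less_imp_le)
  finally show ?thesis .
qed

text \<open>Differentiating \<open>\<theta>\<^bsup>\<beta>\<^sup>2\<^esup>\<close> twice in the same variable produces an extra factor \<open>\<theta>\<^sub>i\<^sup>2\<close>, which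
  appears here as the diagonal term.\<close>
lemma hessian_form_energy_coeffs:
  fixes \<theta> \<xi> :: "nat \<Rightarrow> real"
  defines "\<eta> \<equiv> \<lambda>\<delta> i. \<theta> i ^ (2 * \<delta> i + 1) * \<xi> i"
  shows "(\<Sum>i<m. d i * ((\<Sum>j<m. \<xi> j *
            hom_poly m n (partial_coeffs j (partial_coeffs i (energy_coeffs m (Suc (Suc n)) \<theta>))) v) * \<xi> i))
    = real (Suc (Suc n)) * real (Suc n) * (\<Sum>\<delta>\<in>multi_indices m n. energy_coeffs m n \<theta> \<delta> * monomial m \<delta> v *
        ((\<Sum>i<m. \<Sum>j<m. d i * (\<eta> \<delta> i * \<eta> \<delta> j)) + (\<Sum>i<m. d i * ((\<theta> i)\<^sup>2 - 1) * (\<eta> \<delta> i)\<^sup>2)))"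
proof -
  have form: "(\<Sum>i<m. \<Sum>j<m. d i * (\<eta> \<delta> i * \<eta> \<delta> j)) + (\<Sum>i<m. d i * ((\<theta> i)\<^sup>2 - 1) * (\<eta> \<delta> i)\<^sup>2)
      = (\<Sum>i<m. \<Sum>j<m. d i * \<xi> i * \<xi> j * \<theta> j ^ (2 * \<delta> j + 1) * \<theta> i ^ (2 * (\<delta>(j := Suc (\<delta> j))) i + 1))"
    for \<delta>
  proof -
    have exponent: "\<theta> i ^ (2 * (\<delta>(j := Suc (\<delta> j))) i + 1) = \<theta> i ^ (2 * \<delta> i + 1) * (if i = j then (\<theta> i)\<^sup>2 else 1)"
      for i j
      by (auto simp: power_add power2_eq_square mult_ac)
    have "(\<Sum>j<m. d i * \<xi> i * \<xi> j * \<theta> j ^ (2 * \<delta> j + 1) * \<theta> i ^ (2 * (\<delta>(j := Suc (\<delta> j))) i + 1))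
        = (\<Sum>j<m. d i * (\<eta> \<delta> i * \<eta> \<delta> j)) + d i * ((\<theta> i)\<^sup>2 - 1) * (\<eta> \<delta> i)\<^sup>2" if "i < m" for i
    proof -
      have "(\<Sum>j<m. d i * \<xi> i * \<xi> j * \<theta> j ^ (2 * \<delta> j + 1) * \<theta> i ^ (2 * (\<delta>(j := Suc (\<delta> j))) i + 1))
          = (\<Sum>j<m. d i * (\<eta> \<delta> i * \<eta> \<delta> j) + (if i = j then d i * ((\<theta> i)\<^sup>2 - 1) * (\<eta> \<delta> i)\<^sup>2 else 0))"
        unfolding exponent by (intro sum.cong refl) (auto simp: \<eta>_def power2_eq_square algebra_simps)
      then show ?thesis
        using that by (simp add: sum.distrib)
    qed
    then show ?thesis
      by (simp add: sum.distrib)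
  qed
  show ?thesis
    unfolding form hom_poly_def
    by (simp add: partial_coeffs_energy_coeffs_twice sum_distrib_left sum_distrib_right mult_ac
        sum.swap[of _ "multi_indices m n"])
qed

lemma diffusion_term_ge:
  assumes d: "\<And>i. i < m \<Longrightarrow> 0 \<le> d i" and \<theta>: "\<And>i. i < m \<Longrightarrow> 1 \<le> \<theta> i"
    and d\<theta>: "\<And>i. i < m \<Longrightarrow> real m * (\<Sum>k<m. d k) + 1 \<le> d i * ((\<theta> i)\<^sup>2 - 1)"
    and v: "\<And>j. j < m \<Longrightarrow> 0 \<le> v j"
  shows "real (Suc (Suc n)) * real (Suc n) * (\<Sum>i<m. v i ^ n * (\<xi> i)\<^sup>2)
    \<le> (\<Sum>i<m. d i * ((\<Sum>j<m. \<xi> j *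
          hom_poly m n (partial_coeffs j (partial_coeffs i (energy_coeffs m (Suc (Suc n)) \<theta>))) v) * \<xi> i))"
proof -
  let ?c = "real (Suc (Suc n)) * real (Suc n)"
  define K where "K \<delta> = energy_coeffs m n \<theta> \<delta> * monomial m \<delta> v" for \<delta>
  define \<eta> where "\<eta> \<delta> i = \<theta> i ^ (2 * \<delta> i + 1) * \<xi> i" for \<delta> i
  have "?c * (\<Sum>i<m. v i ^ n * (\<xi> i)\<^sup>2) \<le> ?c * (\<Sum>i<m. (\<xi> i)\<^sup>2 * hom_poly m n (energy_coeffs m n \<theta>) v)"
  proof (intro mult_left_mono sum_mono)
    fix i assume "i \<in> {..<m}"
    then have "v i ^ n \<le> hom_poly m n (energy_coeffs m n \<theta>) v"
      using power_le_hom_poly_energy_coeffs v \<theta> by simp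
    then show "v i ^ n * (\<xi> i)\<^sup>2 \<le> (\<xi> i)\<^sup>2 * hom_poly m n (energy_coeffs m n \<theta>) v"
      by (subst mult.commute) (rule mult_right_mono; simp)
  qed simp
  also have "\<dots> = ?c * (\<Sum>\<delta>\<in>multi_indices m n. K \<delta> * (\<Sum>i<m. (\<xi> i)\<^sup>2))"
    unfolding hom_poly_def K_def by (simp add: sum_distrib_left sum_distrib_right mult_ac, rule sum.swap)
  also have "\<dots> \<le> ?c * (\<Sum>\<delta>\<in>multi_indices m n. K \<delta> *
      ((\<Sum>i<m. \<Sum>j<m. d i * (\<eta> \<delta> i * \<eta> \<delta> j)) + (\<Sum>i<m. d i * ((\<theta> i)\<^sup>2 - 1) * (\<eta> \<delta> i)\<^sup>2)))"
  proof (rule mult_left_mono[OF sum_mono])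
    fix \<delta>
    have "(\<Sum>i<m. (\<xi> i)\<^sup>2) \<le> (\<Sum>i<m. (\<eta> \<delta> i)\<^sup>2)"
    proof (rule sum_mono)
      fix i assume "i \<in> {..<m}"
      then have "1 \<le> (\<theta> i ^ (2 * \<delta> i + 1))\<^sup>2"
        using \<theta> by (intro one_le_power) auto
      from mult_right_mono[OF this, of "(\<xi> i)\<^sup>2"] show "(\<xi> i)\<^sup>2 \<le> (\<eta> \<delta> i)\<^sup>2"
        unfolding \<eta>_def power_mult_distrib by simp
    qed
    also have "\<dots> \<le> (\<Sum>i<m. \<Sum>j<m. d i * (\<eta> \<delta> i * \<eta> \<delta> j)) + (\<Sum>i<m. d i * ((\<theta> i)\<^sup>2 - 1) * (\<eta> \<delta> i)\<^sup>2)"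
      using d d\<theta> by (intro quadratic_form_diagonally_dominant) (auto intro: member_le_sum)
    finally have "(\<Sum>i<m. (\<xi> i)\<^sup>2)
        \<le> (\<Sum>i<m. \<Sum>j<m. d i * (\<eta> \<delta> i * \<eta> \<delta> j)) + (\<Sum>i<m. d i * ((\<theta> i)\<^sup>2 - 1) * (\<eta> \<delta> i)\<^sup>2)" .
    moreover have "0 \<le> K \<delta>"
      unfolding K_def using energy_coeffs_pos[OF \<theta>] monomial_nonneg[OF v] by (simp add: less_imp_le)
    ultimately show "K \<delta> * (\<Sum>i<m. (\<xi> i)\<^sup>2)
        \<le> K \<delta> * ((\<Sum>i<m. \<Sum>j<m. d i * (\<eta> \<delta> i * \<eta> \<delta> j)) + (\<Sum>i<m. d i * ((\<theta> i)\<^sup>2 - 1) * (\<eta> \<delta> i)\<^sup>2))"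
      by (rule mult_left_mono)
  qed simp
  also have "\<dots> = (\<Sum>i<m. d i * ((\<Sum>j<m. \<xi> j *
          hom_poly m n (partial_coeffs j (partial_coeffs i (energy_coeffs m (Suc (Suc n)) \<theta>))) v) * \<xi> i))"
    unfolding K_def \<eta>_def by (rule hessian_form_energy_coeffs[symmetric])
  finally show ?thesis .
qed

section \<open>Calculus on an interval\<close>

lemma AE_le_zero_imp_le_zero_continuous:
  fixes h :: "'a::euclidean_space \<Rightarrow> real"
  assumes S: "open S" and h: "continuous_on S h"
    and ae: "AE z in lborel. z \<in> S \<longrightarrow> h z \<le> 0" and "z \<in> S"
  shows "h z \<le> 0"
proof (rule ccontr)
  assume "\<not> h z \<le> 0"
  let ?W = "S \<inter> h -` {0<..}"
  have "open ?W"
    using continuous_open_preimage[OF h S open_greaterThan] .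
  moreover have "?W \<noteq> {}"
    using \<open>z \<in> S\<close> \<open>\<not> h z \<le> 0\<close> by auto
  moreover have "negligible ?W"
  proof -
    obtain N where N: "N \<in> null_sets lborel" "{z \<in> space lborel. \<not> (z \<in> S \<longrightarrow> h z \<le> 0)} \<subseteq> N"
      using ae unfolding eventually_ae_filter by blast
    then have "N \<in> null_sets lebesgue" and "?W \<subseteq> N"
      by (auto intro: null_sets_completionI)
    then show ?thesis
      by (meson negligible_iff_null_sets negligible_subset)
  qed
  ultimately show False
    using open_not_negligible by blast
qed

lemma integration_by_parts_vanishing:
  fixes \<phi> \<phi>' w w' :: "real \<Rightarrow> real"
  assumes "a \<le> b"
    and \<phi>: "\<And>x. x \<in> {a..b} \<Longrightarrow> (\<phi> has_real_derivative \<phi>' x) (at x within {a..b})"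
    and w: "\<And>x. x \<in> {a..b} \<Longrightarrow> (w has_real_derivative w' x) (at x within {a..b})"
    and "continuous_on {a..b} \<phi>'" "continuous_on {a..b} w'"
    and "w a = 0" "w b = 0"
  shows "integral {a..b} (\<lambda>x. \<phi> x * w' x) = - integral {a..b} (\<lambda>x. \<phi>' x * w x)"
proof -
  have "continuous_on {a..b} \<phi>" "continuous_on {a..b} w"
    using \<phi> w by (meson DERIV_continuous continuous_on_eq_continuous_within)+
  then have integrable: "(\<lambda>x. \<phi>' x * w x) integrable_on {a..b}" "(\<lambda>x. \<phi> x * w' x) integrable_on {a..b}"
    using assms by (auto intro!: integrable_continuous_interval continuous_intros)
  have "((\<lambda>x. \<phi>' x * w x + \<phi> x * w' x) has_integral (\<phi> b * w b - \<phi> a * w a)) {a..b}"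
  proof (rule fundamental_theorem_of_calculus[OF \<open>a \<le> b\<close>])
    fix x assume x: "x \<in> {a..b}"
    have "((\<lambda>x. \<phi> x * w x) has_real_derivative (\<phi>' x * w x + \<phi> x * w' x)) (at x within {a..b})"
      using \<phi>[OF x] w[OF x] by (auto intro!: derivative_eq_intros)
    then show "((\<lambda>x. \<phi> x * w x) has_vector_derivative (\<phi>' x * w x + \<phi> x * w' x)) (at x within {a..b})"
      by (simp add: has_real_derivative_iff_has_vector_derivative)
  qed
  then have "integral {a..b} (\<lambda>x. \<phi>' x * w x) + integral {a..b} (\<lambda>x. \<phi> x * w' x) = 0"
    using assms integral_add[OF integrable] by (simp add: integral_unique)
  then show ?thesis
    by linarith
qed

lemma integral_le_interior:
  fixes f g :: "real \<Rightarrow> real"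
  assumes f: "f integrable_on {a..b}" and g: "g integrable_on {a..b}"
    and le: "\<And>x. x \<in> {a<..<b} \<Longrightarrow> f x \<le> g x"
  shows "integral {a..b} f \<le> integral {a..b} g"
proof -
  let ?f = "\<lambda>x. if x \<in> {a, b} then g x else f x"
  have neg: "negligible {a, b}"
    by auto
  have "integral {a..b} f = integral {a..b} ?f"
    by (rule integral_spike[OF neg]) auto
  also have "\<dots> \<le> integral {a..b} g"
    using le by (intro integral_le[OF integrable_spike[OF f neg] g]) auto
  finally show ?thesis .
qed

lemma continuous_on_slice:
  fixes h :: "real \<Rightarrow> real \<Rightarrow> real"
  assumes "continuous_on (X \<times> Y) (\<lambda>z. h (fst z) (snd z))" "t \<in> Y"
  shows "continuous_on X (\<lambda>x. h x t)"
proof -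
  have "continuous_on X (\<lambda>x. (\<lambda>z. h (fst z) (snd z)) (x, t))"
    by (rule continuous_on_compose2[OF assms(1)]) (use assms(2) in \<open>auto intro!: continuous_intros\<close>)
  then show ?thesis
    by simp
qed

lemma continuous_on_swap_product:
  fixes h :: "real \<Rightarrow> real \<Rightarrow> real"
  assumes "continuous_on (X \<times> Y) (\<lambda>z. h (fst z) (snd z))" "U \<subseteq> Y"
  shows "continuous_on (U \<times> X) (\<lambda>z. h (snd z) (fst z))"
proof -
  have "continuous_on (U \<times> X) (\<lambda>z. (\<lambda>z. h (fst z) (snd z)) (snd z, fst z))"
    by (rule continuous_on_compose2[OF assms(1)]) (use assms(2) in \<open>auto intro!: continuous_intros\<close>)
  then show ?thesis
    by simp
qed

lemma powr_has_real_derivative_at_zero: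
  fixes w :: "real \<Rightarrow> real"
  assumes S: "open S" "x \<in> S" and nonneg: "\<And>y. y \<in> S \<Longrightarrow> 0 \<le> w y" and "w x = 0"
    and w: "(w has_real_derivative w') (at x)" and "1 \<le> a"
  shows "w' = 0" and "((\<lambda>y. w y powr a) has_real_derivative 0) (at x)"
proof -
  obtain \<delta> where "0 < \<delta>" "ball x \<delta> \<subseteq> S"
    using S by (auto elim: openE)
  then show "w' = 0"
    using nonneg \<open>w x = 0\<close>
    by (intro DERIV_local_min[OF w \<open>0 < \<delta>\<close>]) (auto simp: subset_iff dist_real_def)
  then have quotient: "((\<lambda>y. (w y - w x) / (y - x)) \<longlongrightarrow> 0) (at x)"
    using w by (simp add: has_field_derivative_iff)
  have "(w \<longlongrightarrow> 0) (at x)"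
    using DERIV_isCont[OF w] \<open>w x = 0\<close> by (simp add: isCont_def)
  then have "eventually (\<lambda>y. y \<in> S \<and> w y < 1) (at x)"
    using eventually_at_in_open'[OF S] order_tendstoD(2)[of w 0 "at x" 1] by (auto intro: eventually_conj)
  then have "eventually (\<lambda>y. norm ((w y powr a - w x powr a) / (y - x)) \<le> \<bar>(w y - w x) / (y - x)\<bar>) (at x)"
  proof eventually_elim
    case (elim y)
    then have "0 \<le> w y"
      using nonneg by auto
    moreover have "w y powr a \<le> w y powr 1"
      using elim \<open>0 \<le> w y\<close> \<open>1 \<le> a\<close> by (intro powr_mono') auto
    ultimately show ?case
      using \<open>w x = 0\<close> by (auto simp: abs_divide divide_right_mono split: if_splits)
  qed
  then have "((\<lambda>y. (w y powr a - w x powr a) / (y - x)) \<longlongrightarrow> 0) (at x)"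
    by (rule Lim_null_comparison) (rule tendsto_rabs_zero[OF quotient])
  then show "((\<lambda>y. w y powr a) has_real_derivative 0) (at x)"
    by (simp add: has_field_derivative_iff)
qed

lemma deriv_powr_squared:
  fixes w :: "real \<Rightarrow> real" and p :: nat
  assumes "2 \<le> p" and S: "open S" "x \<in> S" and nonneg: "\<And>y. y \<in> S \<Longrightarrow> 0 \<le> w y"
    and w: "(w has_real_derivative w') (at x)"
  shows "(deriv (\<lambda>y. w y powr (real p / 2)) x)\<^sup>2 = (real p / 2)\<^sup>2 * (w x ^ (p - 2) * w'\<^sup>2)"
proof (cases "w x = 0")
  case True
  note zero = powr_has_real_derivative_at_zero[OF S nonneg True w, of "real p / 2"]
  then show ?thesis
    using \<open>2 \<le> p\<close> DERIV_imp_deriv[OF zero(2)] by simp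
next
  case False
  then have pos: "0 < w x"
    using nonneg S by (simp add: order_less_le)
  define a where "a = real p / 2"
  have "((\<lambda>y. w y powr a) has_real_derivative w x powr a * (0 * ln (w x) + w' * a / w x)) (at x)"
    using DERIV_powr[OF w pos DERIV_const[of a]] by simp
  then have "deriv (\<lambda>y. w y powr a) x = a * w' * w x powr (a - 1)"
    using pos by (simp add: DERIV_imp_deriv powr_diff)
  moreover have "(w x powr (a - 1))\<^sup>2 = w x ^ (p - 2)"
  proof -
    have "(w x powr (a - 1))\<^sup>2 = w x powr real (p - 2)"
      using \<open>2 \<le> p\<close> by (simp add: a_def power2_eq_square powr_add[symmetric] of_nat_diff)
    then show ?thesis
      using pos by (simp add: powr_realpow)
  qed
  ultimately show ?thesis
    unfolding a_def[symmetric] by (simp add: power_mult_distrib mult_ac)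
qed

section \<open>Energy estimate along classical solutions\<close>

locale nonneg_neumann_solution =
  fixes L T :: real and m :: nat and d :: "nat \<Rightarrow> real"
    and f :: "nat \<Rightarrow> real \<Rightarrow> real \<Rightarrow> (nat \<Rightarrow> real) \<Rightarrow> real"
    and u ut ux uxx :: "nat \<Rightarrow> real \<Rightarrow> real \<Rightarrow> real"
  assumes L_pos: "0 < L"
    and continuous_u: "\<And>i. i < m \<Longrightarrow> continuous_on ({0..L} \<times> {0<..<T}) (\<lambda>z. u i (fst z) (snd z))"
    and continuous_ut: "\<And>i. i < m \<Longrightarrow> continuous_on ({0..L} \<times> {0<..<T}) (\<lambda>z. ut i (fst z) (snd z))"
    and continuous_ux: "\<And>i. i < m \<Longrightarrow> continuous_on ({0..L} \<times> {0<..<T}) (\<lambda>z. ux i (fst z) (snd z))"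
    and continuous_uxx: "\<And>i. i < m \<Longrightarrow> continuous_on ({0..L} \<times> {0<..<T}) (\<lambda>z. uxx i (fst z) (snd z))"
    and has_derivative_t: "\<And>i x t. i < m \<Longrightarrow> x \<in> {0..L} \<Longrightarrow> t \<in> {0<..<T} \<Longrightarrow>
           ((\<lambda>s. u i x s) has_real_derivative ut i x t) (at t)"
    and has_derivative_x: "\<And>i x t. i < m \<Longrightarrow> x \<in> {0..L} \<Longrightarrow> t \<in> {0<..<T} \<Longrightarrow>
           ((\<lambda>y. u i y t) has_real_derivative ux i x t) (at x within {0..L})"
    and has_derivative_xx: "\<And>i x t. i < m \<Longrightarrow> x \<in> {0..L} \<Longrightarrow> t \<in> {0<..<T} \<Longrightarrow>
           ((\<lambda>y. ux i y t) has_real_derivative uxx i x t) (at x within {0..L})"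
    and neumann: "\<And>i t. i < m \<Longrightarrow> t \<in> {0<..<T} \<Longrightarrow> ux i 0 t = 0 \<and> ux i L t = 0"
    and equation: "\<And>i. i < m \<Longrightarrow> AE z in lborel. z \<in> {0<..<L} \<times> {0<..<T} \<longrightarrow>
           ut i (fst z) (snd z) - d i * uxx i (fst z) (snd z) = f i (fst z) (snd z) (\<lambda>j. u j (fst z) (snd z))"
    and nonneg: "\<And>i x t. i < m \<Longrightarrow> x \<in> {0..L} \<Longrightarrow> t \<in> {0<..<T} \<Longrightarrow> 0 \<le> u i x t"

lemma classical_solution_imp_nonneg_neumann_solution:
  assumes "0 < L" and "classical_solution L m d f T u0 u"
    and "\<forall>i<m. \<forall>x\<in>{0..L}. \<forall>t\<in>{0<..<T}. u i x t \<ge> 0"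
  obtains ut ux uxx where "nonneg_neumann_solution L T m d f u ut ux uxx"
proof -
  from assms(2) obtain ut ux uxx where "\<forall>i<m.
      continuous_on ({0..L} \<times> {0<..<T}) (\<lambda>z. u i (fst z) (snd z)) \<and>
      continuous_on ({0..L} \<times> {0<..<T}) (\<lambda>z. ut i (fst z) (snd z)) \<and>
      continuous_on ({0..L} \<times> {0<..<T}) (\<lambda>z. ux i (fst z) (snd z)) \<and>
      continuous_on ({0..L} \<times> {0<..<T}) (\<lambda>z. uxx i (fst z) (snd z)) \<and>
      (\<forall>x\<in>{0..L}. \<forall>t\<in>{0<..<T}.
         ((\<lambda>s. u i x s) has_real_derivative ut i x t) (at t) \<and>
         ((\<lambda>y. u i y t) has_real_derivative ux i x t) (at x within {0..L}) \<and>
         ((\<lambda>y. ux i y t) has_real_derivative uxx i x t) (at x within {0..L})) \<and>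
      (\<forall>t\<in>{0<..<T}. ux i 0 t = 0 \<and> ux i L t = 0) \<and>
      (AE z in lborel. z \<in> {0<..<L} \<times> {0<..<T} \<longrightarrow>
         ut i (fst z) (snd z) - d i * uxx i (fst z) (snd z) = f i (fst z) (snd z) (\<lambda>j. u j (fst z) (snd z)))"
    unfolding classical_solution_def by blast
  with assms(1,3) have "nonneg_neumann_solution L T m d f u ut ux uxx"
    unfolding nonneg_neumann_solution_def by simp
  then show thesis
    by (rule that)
qed

context nonneg_neumann_solution
begin

lemma continuous_on_slices:
  assumes "i < m" "t \<in> {0<..<T}"
  shows "continuous_on {0..L} (\<lambda>x. u i x t)" "continuous_on {0..L} (\<lambda>x. ut i x t)"
    "continuous_on {0..L} (\<lambda>x. ux i x t)" "continuous_on {0..L} (\<lambda>x. uxx i x t)"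
  using assms by (auto intro!: continuous_on_slice[where Y = "{0<..<T}"]
      continuous_u continuous_ut continuous_ux continuous_uxx)

lemma integral_hom_poly_has_real_derivative:
  assumes t: "t \<in> {0<..<T}"
  shows "((\<lambda>s. integral {0..L} (\<lambda>x. hom_poly m (Suc k) a (\<lambda>j. u j x s))) has_real_derivative
    integral {0..L} (\<lambda>x. \<Sum>i<m. ut i x t * hom_poly m k (partial_coeffs i a) (\<lambda>j. u j x t))) (at t)"
proof -
  define \<delta> where "\<delta> = min t (T - t) / 2"
  let ?U = "{t - \<delta> .. t + \<delta>}"
  have "0 < \<delta>" "\<delta> \<le> t / 2" "\<delta> \<le> (T - t) / 2"
    using t by (auto simp: \<delta>_def)
  then have U: "?U \<subseteq> {0<..<T}"
    using t by auto
  let ?F = "\<lambda>s x. hom_poly m (Suc k) a (\<lambda>j. u j x s)"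
  let ?F' = "\<lambda>s x. \<Sum>i<m. ut i x s * hom_poly m k (partial_coeffs i a) (\<lambda>j. u j x s)"
  have "((\<lambda>s. integral (cbox 0 L) (?F s)) has_field_derivative integral (cbox 0 L) (?F' t)) (at t within ?U)"
  proof (rule leibniz_rule_field_derivative)
    fix s x assume "s \<in> ?U" "x \<in> cbox 0 L"
    then have "s \<in> {0<..<T}" "x \<in> {0..L}"
      using U by auto
    then show "((\<lambda>s. ?F s x) has_field_derivative ?F' s x) (at s within ?U)"
      by (intro hom_poly_has_real_derivative has_field_derivative_at_within[OF has_derivative_t])
  next
    fix s assume "s \<in> ?U"
    then show "?F s integrable_on cbox 0 L"
      using U continuous_on_slices
      by (auto intro!: integrable_continuous_interval continuous_on_hom_poly)
  next
    have "continuous_on (?U \<times> {0..L}) (\<lambda>z. u j (snd z) (fst z))"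
      "continuous_on (?U \<times> {0..L}) (\<lambda>z. ut j (snd z) (fst z))" if "j < m" for j
      using that U continuous_u continuous_ut by (auto intro: continuous_on_swap_product)
    then have "continuous_on (?U \<times> {0..L}) (\<lambda>z. ?F' (fst z) (snd z))"
      by (auto intro!: continuous_intros)
    then show "continuous_on (?U \<times> cbox 0 L) (\<lambda>(s, x). ?F' s x)"
      by (simp add: split_beta)
  qed (use \<open>0 < \<delta>\<close> in auto)
  moreover have "at t within ?U = at t"
    by (rule at_within_interior) (use \<open>0 < \<delta>\<close> in auto)
  ultimately show ?thesis
    by simp
qed

lemma integral_hom_poly_mult_uxx:
  assumes "i < m" "t \<in> {0<..<T}"
  shows "integral {0..L} (\<lambda>x. hom_poly m (Suc k) a (\<lambda>j. u j x t) * uxx i x t)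
    = - integral {0..L} (\<lambda>x. (\<Sum>j<m. ux j x t * hom_poly m k (partial_coeffs j a) (\<lambda>j. u j x t)) * ux i x t)"
proof (rule integration_by_parts_vanishing)
  show "((\<lambda>x. hom_poly m (Suc k) a (\<lambda>j. u j x t)) has_real_derivative
      (\<Sum>j<m. ux j x t * hom_poly m k (partial_coeffs j a) (\<lambda>j. u j x t))) (at x within {0..L})"
    if "x \<in> {0..L}" for x
    using that assms has_derivative_x by (intro hom_poly_has_real_derivative) auto
  show "continuous_on {0..L} (\<lambda>x. \<Sum>j<m. ux j x t * hom_poly m k (partial_coeffs j a) (\<lambda>j. u j x t))"
    using assms continuous_on_slices by (auto intro!: continuous_intros)
qed (use assms L_pos has_derivative_xx neumann continuous_on_slices in auto)

lemma reaction_rows_le_AE: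
  fixes A :: "nat \<Rightarrow> nat \<Rightarrow> real"
  assumes bound: "\<And>i v x s. i < m \<Longrightarrow> (\<And>j. j < m \<Longrightarrow> 0 \<le> v j) \<Longrightarrow> x \<in> {0<..<L} \<Longrightarrow> 0 \<le> s \<Longrightarrow>
      (\<Sum>j\<le>i. A i j * f j x s v) \<le> C * (1 + (\<Sum>j<m. v j)) powr r"
    and "i < m"
  shows "AE z in lborel. z \<in> {0<..<L} \<times> {0<..<T} \<longrightarrow>
    (\<Sum>j\<le>i. A i j * (ut j (fst z) (snd z) - d j * uxx j (fst z) (snd z)))
      \<le> C * (1 + (\<Sum>j<m. u j (fst z) (snd z))) powr r"
proof -
  have "AE z in lborel. \<forall>j\<in>{..<m}. z \<in> {0<..<L} \<times> {0<..<T} \<longrightarrow>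
      ut j (fst z) (snd z) - d j * uxx j (fst z) (snd z) = f j (fst z) (snd z) (\<lambda>k. u k (fst z) (snd z))"
    using equation by (intro AE_finite_allI) auto
  then show ?thesis
  proof (rule AE_mp[OF _ AE_I2], intro impI)
    fix z assume eq: "\<forall>j\<in>{..<m}. z \<in> {0<..<L} \<times> {0<..<T} \<longrightarrow>
        ut j (fst z) (snd z) - d j * uxx j (fst z) (snd z) = f j (fst z) (snd z) (\<lambda>k. u k (fst z) (snd z))"
      and z: "z \<in> {0<..<L} \<times> {0<..<T}"
    have "(\<Sum>j\<le>i. A i j * (ut j (fst z) (snd z) - d j * uxx j (fst z) (snd z)))
        = (\<Sum>j\<le>i. A i j * f j (fst z) (snd z) (\<lambda>k. u k (fst z) (snd z)))"
      using eq z \<open>i < m\<close> by (intro sum.cong) auto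
    also have "\<dots> \<le> C * (1 + (\<Sum>j<m. u j (fst z) (snd z))) powr r"
      using z nonneg \<open>i < m\<close> by (intro bound) auto
    finally show "(\<Sum>j\<le>i. A i j * (ut j (fst z) (snd z) - d j * uxx j (fst z) (snd z)))
        \<le> C * (1 + (\<Sum>j<m. u j (fst z) (snd z))) powr r" .
  qed
qed

text \<open>The equation only holds almost everywhere and \<open>f\<close> need not be continuous, but the bound
  transfers to every point because its left-hand side is continuous.\<close>
lemma reaction_rows_le:
  fixes A :: "nat \<Rightarrow> nat \<Rightarrow> real"
  assumes bound: "\<And>i v x s. i < m \<Longrightarrow> (\<And>j. j < m \<Longrightarrow> 0 \<le> v j) \<Longrightarrow> x \<in> {0<..<L} \<Longrightarrow> 0 \<le> s \<Longrightarrow>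
      (\<Sum>j\<le>i. A i j * f j x s v) \<le> C * (1 + (\<Sum>j<m. v j)) powr r"
    and "i < m" "x \<in> {0<..<L}" "t \<in> {0<..<T}"
  shows "(\<Sum>j\<le>i. A i j * (ut j x t - d j * uxx j x t)) \<le> C * (1 + (\<Sum>j<m. u j x t)) powr r"
proof -
  let ?S = "{0<..<L} \<times> {0<..<T}"
  let ?h = "\<lambda>z. (\<Sum>j\<le>i. A i j * (ut j (fst z) (snd z) - d j * uxx j (fst z) (snd z)))
      - C * (1 + (\<Sum>j<m. u j (fst z) (snd z))) powr r"
  have sub: "?S \<subseteq> {0..L} \<times> {0<..<T}"
    by auto
  have "continuous_on ?S (\<lambda>z. u j (fst z) (snd z))" "continuous_on ?S (\<lambda>z. ut j (fst z) (snd z))"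
    "continuous_on ?S (\<lambda>z. uxx j (fst z) (snd z))" if "j < m" for j
    by (rule continuous_on_subset[OF _ sub], use that continuous_u continuous_ut continuous_uxx in blast)+
  moreover have "0 < 1 + (\<Sum>j<m. u j (fst z) (snd z))" if "z \<in> ?S" for z
    using that nonneg by (auto intro!: add_pos_nonneg sum_nonneg)
  ultimately have "continuous_on ?S ?h"
    using \<open>i < m\<close> by (auto intro!: continuous_intros simp: less_imp_neq[THEN not_sym])
  moreover have "AE z in lborel. z \<in> ?S \<longrightarrow> ?h z \<le> 0"
  proof -
    have "AE z in lborel. z \<in> ?S \<longrightarrow>
        (\<Sum>j\<le>i. A i j * (ut j (fst z) (snd z) - d j * uxx j (fst z) (snd z)))
          \<le> C * (1 + (\<Sum>j<m. u j (fst z) (snd z))) powr r"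
      by (rule reaction_rows_le_AE) (use bound \<open>i < m\<close> in auto)
    then show ?thesis
      by eventually_elim simp
  qed
  ultimately have "?h (x, t) \<le> 0"
    by (rule AE_le_zero_imp_le_zero_continuous[rotated]) (use assms in \<open>auto intro: open_Times\<close>)
  then show ?thesis
    by simp
qed

text \<open>At the endpoints \<open>deriv\<close> sees values of \<open>u\<close> outside \<open>[0, L]\<close>; they are a null set.\<close>
lemma integral_deriv_powr_squared:
  assumes "2 \<le> p" "i < m" "t \<in> {0<..<T}"
  shows "integral {0..L} (\<lambda>x. (deriv (\<lambda>y. u i y t powr (real p / 2)) x)\<^sup>2)
    = integral {0..L} (\<lambda>x. (real p / 2)\<^sup>2 * (u i x t ^ (p - 2) * (ux i x t)\<^sup>2))"
proof (rule integral_spike[of "{0, L}"])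
  fix x assume "x \<in> {0..L} - {0, L}"
  then have x: "x \<in> {0<..<L}"
    by auto
  then have "((\<lambda>y. u i y t) has_real_derivative ux i x t) (at x)"
    using has_derivative_x[OF \<open>i < m\<close> _ \<open>t \<in> _\<close>, of x] at_within_interior[of x "{0..L}"] by auto
  then show "(real p / 2)\<^sup>2 * (u i x t ^ (p - 2) * (ux i x t)\<^sup>2) = (deriv (\<lambda>y. u i y t powr (real p / 2)) x)\<^sup>2"
    using assms x nonneg by (intro deriv_powr_squared[symmetric, where S = "{0<..<L}"]) auto
qed auto

lemma integral_energy_identity:
  fixes a :: "(nat \<Rightarrow> nat) \<Rightarrow> real" and k :: nat
  assumes t: "t \<in> {0<..<T}"
  defines "P \<equiv> \<lambda>i x. hom_poly m (Suc k) (partial_coeffs i a) (\<lambda>j. u j x t)"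
    and "Q \<equiv> \<lambda>i j x. hom_poly m k (partial_coeffs j (partial_coeffs i a)) (\<lambda>j. u j x t)"
  shows "integral {0..L} (\<lambda>x. \<Sum>i<m. ut i x t * P i x)
    = integral {0..L} (\<lambda>x. \<Sum>i<m. (ut i x t - d i * uxx i x t) * P i x)
      - integral {0..L} (\<lambda>x. \<Sum>i<m. d i * ((\<Sum>j<m. ux j x t * Q i j x) * ux i x t))"
proof -
  have cont: "continuous_on {0..L} (P i)" "continuous_on {0..L} (Q i j)" for i j
    unfolding P_def Q_def using t continuous_on_slices by (auto intro!: continuous_intros)
  have int: "(\<lambda>x. P i x * uxx i x t) integrable_on {0..L}"
    "(\<lambda>x. (\<Sum>j<m. ux j x t * Q i j x) * ux i x t) integrable_on {0..L}"
    "(\<lambda>x. (ut i x t - d i * uxx i x t) * P i x) integrable_on {0..L}" if "i < m" for i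
    using that t cont continuous_on_slices by (auto intro!: integrable_continuous_interval continuous_intros)
  have "integral {0..L} (\<lambda>x. \<Sum>i<m. ut i x t * P i x)
      = integral {0..L} (\<lambda>x. (\<Sum>i<m. (ut i x t - d i * uxx i x t) * P i x) + (\<Sum>i<m. d i * (P i x * uxx i x t)))"
    unfolding sum.distrib[symmetric] by (simp add: algebra_simps)
  also have "\<dots> = integral {0..L} (\<lambda>x. \<Sum>i<m. (ut i x t - d i * uxx i x t) * P i x)
      + integral {0..L} (\<lambda>x. \<Sum>i<m. d i * (P i x * uxx i x t))"
    using int by (intro integral_add integrable_sum integrable_on_mult_right) auto
  also have "integral {0..L} (\<lambda>x. \<Sum>i<m. d i * (P i x * uxx i x t))
      = (\<Sum>i<m. d i * integral {0..L} (\<lambda>x. P i x * uxx i x t))"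
    by (subst integral_sum) (auto intro: integrable_on_mult_right int)
  also have "\<dots> = - (\<Sum>i<m. d i * integral {0..L} (\<lambda>x. (\<Sum>j<m. ux j x t * Q i j x) * ux i x t))"
    unfolding P_def Q_def using t by (simp add: integral_hom_poly_mult_uxx sum_negf[symmetric])
  also have "\<dots> = - integral {0..L} (\<lambda>x. \<Sum>i<m. d i * ((\<Sum>j<m. ux j x t * Q i j x) * ux i x t))"
    by (subst integral_sum) (auto intro: integrable_on_mult_right int)
  finally show ?thesis
    by simp
qed

lemma integral_gradient_le_diffusion:
  fixes \<theta> :: "nat \<Rightarrow> real" and n :: nat
  assumes t: "t \<in> {0<..<T}" and d: "\<And>i. i < m \<Longrightarrow> 0 \<le> d i" and \<theta>: "\<And>i. i < m \<Longrightarrow> 1 \<le> \<theta> i"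
    and d\<theta>: "\<And>i. i < m \<Longrightarrow> real m * (\<Sum>k<m. d k) + 1 \<le> d i * ((\<theta> i)\<^sup>2 - 1)"
  defines "Q \<equiv> \<lambda>i j x. hom_poly m n (partial_coeffs j (partial_coeffs i (energy_coeffs m (Suc (Suc n)) \<theta>)))
      (\<lambda>j. u j x t)"
  shows "(\<Sum>i<m. integral {0..L} (\<lambda>x. (deriv (\<lambda>y. u i y t powr (real (Suc (Suc n)) / 2)) x)\<^sup>2))
    \<le> integral {0..L} (\<lambda>x. \<Sum>i<m. d i * ((\<Sum>j<m. ux j x t * Q i j x) * ux i x t))"
proof -
  let ?c = "(real (Suc (Suc n)) / 2)\<^sup>2"
  have int: "(\<lambda>x. u i x t ^ n * (ux i x t)\<^sup>2) integrable_on {0..L}" if "i < m" for i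
    using that t continuous_on_slices by (auto intro!: integrable_continuous_interval continuous_intros)
  have "(\<Sum>i<m. integral {0..L} (\<lambda>x. (deriv (\<lambda>y. u i y t powr (real (Suc (Suc n)) / 2)) x)\<^sup>2))
      = (\<Sum>i<m. integral {0..L} (\<lambda>x. ?c * (u i x t ^ n * (ux i x t)\<^sup>2)))"
    using t integral_deriv_powr_squared[of "Suc (Suc n)"] by simp
  also have "\<dots> = integral {0..L} (\<lambda>x. \<Sum>i<m. ?c * (u i x t ^ n * (ux i x t)\<^sup>2))"
    by (subst integral_sum) (auto intro: int integrable_on_mult_right)
  also have "\<dots> \<le> integral {0..L} (\<lambda>x. \<Sum>i<m. d i * ((\<Sum>j<m. ux j x t * Q i j x) * ux i x t))"
  proof (rule integral_le)
    show "(\<lambda>x. \<Sum>i<m. d i * ((\<Sum>j<m. ux j x t * Q i j x) * ux i x t)) integrable_on {0..L}"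
      unfolding Q_def using t continuous_on_slices by (auto intro!: integrable_continuous_interval continuous_intros)
    fix x assume x: "x \<in> {0..L}"
    have "?c \<le> real (Suc (Suc n)) * real (Suc n)"
      by (simp add: power2_eq_square field_simps)
    then have "(\<Sum>i<m. ?c * (u i x t ^ n * (ux i x t)\<^sup>2))
        \<le> real (Suc (Suc n)) * real (Suc n) * (\<Sum>i<m. u i x t ^ n * (ux i x t)\<^sup>2)"
      unfolding sum_distrib_left using x t nonneg by (intro sum_mono mult_right_mono) auto
    also have "\<dots> \<le> (\<Sum>i<m. d i * ((\<Sum>j<m. ux j x t * Q i j x) * ux i x t))"
      unfolding Q_def using x t nonneg d \<theta> d\<theta> by (intro diffusion_term_ge) auto
    finally show "(\<Sum>i<m. ?c * (u i x t ^ n * (ux i x t)\<^sup>2)) \<le> \<dots>" .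
  qed (use int in \<open>auto intro: integrable_sum integrable_on_mult_right\<close>)
  finally show ?thesis .
qed

lemma integral_reaction_le:
  fixes A :: "nat \<Rightarrow> nat \<Rightarrow> real" and \<theta> :: "nat \<Rightarrow> real" and n :: nat
  assumes t: "t \<in> {0<..<T}"
    and A_diag: "\<And>i. i < m \<Longrightarrow> 0 < A i i"
    and A_nonneg: "\<And>i j. i < m \<Longrightarrow> j < m \<Longrightarrow> 0 \<le> A i j"
    and bound: "\<And>i v x s. i < m \<Longrightarrow> (\<And>j. j < m \<Longrightarrow> 0 \<le> v j) \<Longrightarrow> x \<in> {0<..<L} \<Longrightarrow> 0 \<le> s \<Longrightarrow>
      (\<Sum>j\<le>i. A i j * f j x s v) \<le> C * (1 + (\<Sum>j<m. v j)) powr r"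
    and "0 \<le> C" "0 \<le> r" and \<theta>: "\<And>i. i < m \<Longrightarrow> 1 \<le> \<theta> i"
    and dominant: "\<And>\<gamma> i. \<gamma> \<in> multi_indices m (Suc n) \<Longrightarrow> i < m \<Longrightarrow>
       (\<Sum>k\<in>{i<..<m}. A k i * (\<theta> k ^ (2 * \<gamma> k + 1) / A k k)) \<le> \<theta> i ^ (2 * \<gamma> i + 1)"
  defines "P \<equiv> \<lambda>i x. hom_poly m (Suc n) (partial_coeffs i (energy_coeffs m (Suc (Suc n)) \<theta>)) (\<lambda>j. u j x t)"
    and "q \<equiv> real (Suc (Suc n)) - 1 + r"
  shows "integral {0..L} (\<lambda>x. \<Sum>i<m. (ut i x t - d i * uxx i x t) * P i x)
    \<le> reaction_constant m n A \<theta> * C * (real m + 1) powr q * (L + (\<Sum>i<m. integral {0..L} (\<lambda>x. u i x t powr q)))"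
proof -
  let ?K = "reaction_constant m n A \<theta> * C * (real m + 1) powr q"
  have "0 < q"
    using \<open>0 \<le> r\<close> by (simp add: q_def)
  have cont: "continuous_on {0..L} (\<lambda>x. u i x t powr q)" if "i < m" for i
    using that t continuous_on_slices nonneg \<open>0 < q\<close> by (intro continuous_on_powr') auto
  have "integral {0..L} (\<lambda>x. \<Sum>i<m. (ut i x t - d i * uxx i x t) * P i x)
      \<le> integral {0..L} (\<lambda>x. ?K * (1 + (\<Sum>i<m. u i x t powr q)))"
  proof (rule integral_le_interior)
    fix x assume "x \<in> {0<..<L}"
    then show "(\<Sum>i<m. (ut i x t - d i * uxx i x t) * P i x) \<le> ?K * (1 + (\<Sum>i<m. u i x t powr q))"
      unfolding P_def q_def using t nonneg \<theta> \<open>0 \<le> C\<close> \<open>0 \<le> r\<close>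
      by (intro reaction_term_le_powr A_diag A_nonneg dominant reaction_rows_le[OF bound]) auto
  next
    show "(\<lambda>x. \<Sum>i<m. (ut i x t - d i * uxx i x t) * P i x) integrable_on {0..L}"
      unfolding P_def using t continuous_on_slices by (auto intro!: integrable_continuous_interval continuous_intros)
    show "(\<lambda>x. ?K * (1 + (\<Sum>i<m. u i x t powr q))) integrable_on {0..L}"
      using cont by (auto intro!: integrable_continuous_interval continuous_on_mult continuous_on_add
          continuous_on_const continuous_on_sum)
  qed
  also have "\<dots> = ?K * (L + (\<Sum>i<m. integral {0..L} (\<lambda>x. u i x t powr q)))"
  proof -
    have "integral {0..L} (\<lambda>x. 1 + (\<Sum>i<m. u i x t powr q))
        = integral {0..L} (\<lambda>x. 1) + integral {0..L} (\<lambda>x. \<Sum>i<m. u i x t powr q)"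
      using cont by (intro integral_add integrable_continuous_interval continuous_on_sum) auto
    also have "\<dots> = L + (\<Sum>i<m. integral {0..L} (\<lambda>x. u i x t powr q))"
      using L_pos cont by (subst integral_sum) (auto intro: integrable_continuous_interval)
    finally show ?thesis
      by simp
  qed
  finally show ?thesis .
qed

lemma energy_estimate:
  fixes A :: "nat \<Rightarrow> nat \<Rightarrow> real" and \<theta> :: "nat \<Rightarrow> real" and n :: nat
  assumes t: "t \<in> {0<..<T}"
    and A_diag: "\<And>i. i < m \<Longrightarrow> 0 < A i i"
    and A_nonneg: "\<And>i j. i < m \<Longrightarrow> j < m \<Longrightarrow> 0 \<le> A i j"
    and bound: "\<And>i v x s. i < m \<Longrightarrow> (\<And>j. j < m \<Longrightarrow> 0 \<le> v j) \<Longrightarrow> x \<in> {0<..<L} \<Longrightarrow> 0 \<le> s \<Longrightarrow>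
      (\<Sum>j\<le>i. A i j * f j x s v) \<le> C * (1 + (\<Sum>j<m. v j)) powr r"
    and "0 \<le> C" "0 \<le> r" and d: "\<And>i. i < m \<Longrightarrow> 0 \<le> d i" and \<theta>: "\<And>i. i < m \<Longrightarrow> 1 \<le> \<theta> i"
    and d\<theta>: "\<And>i. i < m \<Longrightarrow> real m * (\<Sum>k<m. d k) + 1 \<le> d i * ((\<theta> i)\<^sup>2 - 1)"
    and dominant: "\<And>\<gamma> i. \<gamma> \<in> multi_indices m (Suc n) \<Longrightarrow> i < m \<Longrightarrow>
       (\<Sum>k\<in>{i<..<m}. A k i * (\<theta> k ^ (2 * \<gamma> k + 1) / A k k)) \<le> \<theta> i ^ (2 * \<gamma> i + 1)"
  defines "q \<equiv> real (Suc (Suc n)) - 1 + r"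
  shows "\<exists>D. ((\<lambda>s. energy m (Suc (Suc n)) \<theta> L u s) has_real_derivative D) (at t) \<and>
    D + (\<Sum>i<m. integral {0..L} (\<lambda>x. (deriv (\<lambda>y. u i y t powr (real (Suc (Suc n)) / 2)) x)\<^sup>2))
      \<le> reaction_constant m n A \<theta> * C * (real m + 1) powr q * (L + (\<Sum>i<m. integral {0..L} (\<lambda>x. u i x t powr q)))"
proof -
  let ?E = "energy_coeffs m (Suc (Suc n)) \<theta>"
  let ?P = "\<lambda>i x. hom_poly m (Suc n) (partial_coeffs i ?E) (\<lambda>j. u j x t)"
  let ?Q = "\<lambda>i j x. hom_poly m n (partial_coeffs j (partial_coeffs i ?E)) (\<lambda>j. u j x t)"
  let ?D = "integral {0..L} (\<lambda>x. \<Sum>i<m. ut i x t * ?P i x)"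
  let ?reaction = "integral {0..L} (\<lambda>x. \<Sum>i<m. (ut i x t - d i * uxx i x t) * ?P i x)"
  let ?diffusion = "integral {0..L} (\<lambda>x. \<Sum>i<m. d i * ((\<Sum>j<m. ux j x t * ?Q i j x) * ux i x t))"
  let ?gradient = "\<Sum>i<m. integral {0..L} (\<lambda>x. (deriv (\<lambda>y. u i y t powr (real (Suc (Suc n)) / 2)) x)\<^sup>2)"
  have "((\<lambda>s. energy m (Suc (Suc n)) \<theta> L u s) has_real_derivative ?D) (at t)"
    unfolding energy_eq_integral_hom_poly by (rule integral_hom_poly_has_real_derivative[OF t])
  moreover have "?D = ?reaction - ?diffusion"
    by (rule integral_energy_identity[OF t])
  moreover have "?gradient \<le> ?diffusion"
    by (rule integral_gradient_le_diffusion) (use t d \<theta> d\<theta> in auto)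
  moreover have "?reaction \<le> reaction_constant m n A \<theta> * C * (real m + 1) powr q
      * (L + (\<Sum>i<m. integral {0..L} (\<lambda>x. u i x t powr q)))"
    unfolding q_def by (rule integral_reaction_le) (use assms in auto)
  ultimately show ?thesis
    by (intro exI[of _ ?D] conjI) (simp, linarith)
qed

end

lemma classical_solution_energy_estimate:
  fixes A :: "nat \<Rightarrow> nat \<Rightarrow> real" and n :: nat
  assumes L_pos: "0 < L"
    and A_diag: "\<And>i. i < m \<Longrightarrow> 0 < A i i"
    and A_nonneg: "\<And>i j. i < m \<Longrightarrow> j < m \<Longrightarrow> 0 \<le> A i j"
    and d_pos: "\<And>i. i < m \<Longrightarrow> 0 < d i"
    and bound: "\<And>i v x s. i < m \<Longrightarrow> (\<And>j. j < m \<Longrightarrow> 0 \<le> v j) \<Longrightarrow> x \<in> {0<..<L} \<Longrightarrow> 0 \<le> s \<Longrightarrow>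
      (\<Sum>j\<le>i. A i j * f j x s v) \<le> C * (1 + (\<Sum>j<m. v j)) powr r"
    and "0 \<le> C" "0 \<le> r"
    and sol: "classical_solution L m d f T u0 u"
    and u_nonneg: "\<forall>i<m. \<forall>x\<in>{0..L}. \<forall>t\<in>{0<..<T}. u i x t \<ge> 0"
    and t: "t \<in> {0<..<T}"
  defines "\<theta> \<equiv> theta_choice m n A d" and "q \<equiv> real (Suc (Suc n)) - 1 + r"
    and "K \<equiv> reaction_constant m n A (theta_choice m n A d) * C * (real m + 1) powr (real (Suc (Suc n)) - 1 + r)"
  shows "\<exists>D. ((\<lambda>s. energy m (Suc (Suc n)) \<theta> L u s) has_real_derivative D) (at t) \<and>
    D + (\<Sum>i<m. integral {0..L} (\<lambda>x. (deriv (\<lambda>y. u i y t powr (real (Suc (Suc n)) / 2)) x)\<^sup>2))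
      \<le> (K * (L + 1) + 1) * (1 + (\<Sum>i<m. integral {0..L} (\<lambda>x. u i x t powr q)))"
proof -
  obtain ut ux uxx where "nonneg_neumann_solution L T m d f u ut ux uxx"
    using classical_solution_imp_nonneg_neumann_solution[OF L_pos sol u_nonneg] .
  then interpret nonneg_neumann_solution L T m d f u ut ux uxx .
  have \<theta>: "\<And>i. 1 \<le> \<theta> i"
    unfolding \<theta>_def by (rule theta_choice_ge_one[OF A_diag A_nonneg d_pos])
  have \<theta>_diffusion: "\<And>i. i < m \<Longrightarrow> real m * (\<Sum>k<m. d k) + 1 \<le> d i * ((\<theta> i)\<^sup>2 - 1)"
    unfolding \<theta>_def by (rule theta_choice_diffusion[OF A_diag A_nonneg d_pos])
  have \<theta>_dominant: "\<And>\<gamma> i. \<gamma> \<in> multi_indices m (Suc n) \<Longrightarrow> i < m \<Longrightarrow>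
      (\<Sum>k\<in>{i<..<m}. A k i * (\<theta> k ^ (2 * \<gamma> k + 1) / A k k)) \<le> \<theta> i ^ (2 * \<gamma> i + 1)"
    unfolding \<theta>_def by (rule theta_choice_dominant[OF A_diag A_nonneg d_pos])
  define X where "X = (\<Sum>i<m. integral {0..L} (\<lambda>x. u i x t powr q))"
  have estimate: "\<exists>D. ((\<lambda>s. energy m (Suc (Suc n)) \<theta> L u s) has_real_derivative D) (at t) \<and>
      D + (\<Sum>i<m. integral {0..L} (\<lambda>x. (deriv (\<lambda>y. u i y t powr (real (Suc (Suc n)) / 2)) x)\<^sup>2))
        \<le> K * (L + X)"
    unfolding K_def q_def X_def \<theta>_def[symmetric]
    by (rule energy_estimate)
       (use t A_diag A_nonneg bound \<open>0 \<le> C\<close> \<open>0 \<le> r\<close> d_pos \<theta> \<theta>_diffusion \<theta>_dominant in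
        \<open>auto intro: less_imp_le\<close>)
  have "0 \<le> K"
    unfolding K_def \<theta>_def[symmetric] using A_diag \<theta> \<open>0 \<le> C\<close>
    by (intro mult_nonneg_nonneg reaction_constant_nonneg) auto
  moreover have "0 \<le> X"
    unfolding X_def by (intro sum_nonneg) (metis integral_nonneg not_integrable_integral order_refl powr_ge_zero)
  ultimately have "K * (L + X) \<le> (K * (L + 1) + 1) * (1 + X)"
    using L_pos mult_right_mono[of K "K * (L + 1)" X] by (simp add: algebra_simps)
  with estimate show ?thesis
    unfolding X_def by fastforce
qed

theorem lemma4p4:
  fixes L :: real and m :: nat and d :: "nat \<Rightarrow> real"
    and f :: "nat \<Rightarrow> real \<Rightarrow> real \<Rightarrow> (nat \<Rightarrow> real) \<Rightarrow> real"
    and A :: "nat \<Rightarrow> nat \<Rightarrow> real" and r :: real and C :: real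
  assumes L_pos: "L > 0"
    and m_pos: "m \<ge> 1"
    and d_pos: "\<forall>i<m. d i > 0"
    and A_nonneg: "\<forall>i<m. \<forall>j<m. A i j \<ge> 0"
    and A_diag: "\<forall>i<m. A i i > 0"
    and A_lower: "\<forall>i<m. \<forall>j<m. i < j \<longrightarrow> A i j = 0"
    and r_ge: "r \<ge> 1"
    and C_pos: "C > 0"
    and A4: "\<forall>i<m. \<forall>v :: nat \<Rightarrow> real. (\<forall>j<m. v j \<ge> 0) \<longrightarrow>
               (\<forall>x\<in>{0<..<L}. \<forall>t\<ge>0.
                  (\<Sum>j\<le>i. A i j * f j x t v) \<le> C * (1 + (\<Sum>j<m. v j)) powr r)"
  shows "\<forall>p::nat. p \<ge> 2 \<longrightarrow>
    (\<exists>\<theta> :: nat \<Rightarrow> real. (\<forall>i<m. \<theta> i > 0) \<and>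
      (\<exists>\<alpha>>0. \<exists>C'>0. \<forall>T u0 u. T > 0 \<longrightarrow> classical_solution L m d f T u0 u \<longrightarrow>
         (\<forall>i<m. \<forall>x\<in>{0..L}. \<forall>t\<in>{0<..<T}. u i x t \<ge> 0) \<longrightarrow>
         (\<forall>t\<in>{0<..<T}. \<exists>D. ((\<lambda>s. energy m p \<theta> L u s) has_real_derivative D) (at t) \<and>
            D + \<alpha> * (\<Sum>i<m. integral {0..L} (\<lambda>x. (deriv (\<lambda>y. u i y t powr (real p / 2)) x)\<^sup>2))
              \<le> C' * (1 + (\<Sum>i<m. integral {0..L} (\<lambda>x. u i x t powr (real p - 1 + r)))))))"
proof (intro allI impI)
  fix p :: nat
  assume "2 \<le> p"
  then obtain n where p: "p = Suc (Suc n)"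
    by (metis add_2_eq_Suc le_Suc_ex)
  define \<theta> where "\<theta> = theta_choice m n A d"
  define K where "K = reaction_constant m n A \<theta> * C * (real m + 1) powr (real p - 1 + r)"
  have "0 \<le> K"
    unfolding K_def \<theta>_def using A_diag A_nonneg d_pos C_pos
    by (intro mult_nonneg_nonneg reaction_constant_nonneg theta_choice_ge_one) auto
  have "\<forall>T u0 u. T > 0 \<longrightarrow> classical_solution L m d f T u0 u \<longrightarrow>
      (\<forall>i<m. \<forall>x\<in>{0..L}. \<forall>t\<in>{0<..<T}. u i x t \<ge> 0) \<longrightarrow>
      (\<forall>t\<in>{0<..<T}. \<exists>D. ((\<lambda>s. energy m p \<theta> L u s) has_real_derivative D) (at t) \<and>
         D + 1 * (\<Sum>i<m. integral {0..L} (\<lambda>x. (deriv (\<lambda>y. u i y t powr (real p / 2)) x)\<^sup>2))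
           \<le> (K * (L + 1) + 1) * (1 + (\<Sum>i<m. integral {0..L} (\<lambda>x. u i x t powr (real p - 1 + r)))))"
    unfolding p \<theta>_def K_def mult_1 using L_pos A_diag A_nonneg d_pos A4 C_pos r_ge
    by (intro allI impI ballI classical_solution_energy_estimate) auto
  moreover have "\<forall>i<m. 0 < \<theta> i" and "0 < K * (L + 1) + 1"
    unfolding \<theta>_def using \<open>0 \<le> K\<close> L_pos A_diag A_nonneg d_pos
    by (auto intro: less_le_trans[OF zero_less_one theta_choice_ge_one] add_nonneg_pos)
  ultimately show "\<exists>\<theta>. (\<forall>i<m. \<theta> i > 0) \<and>
      (\<exists>\<alpha>>0. \<exists>C'>0. \<forall>T u0 u. T > 0 \<longrightarrow> classical_solution L m d f T u0 u \<longrightarrow>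
         (\<forall>i<m. \<forall>x\<in>{0..L}. \<forall>t\<in>{0<..<T}. u i x t \<ge> 0) \<longrightarrow>
         (\<forall>t\<in>{0<..<T}. \<exists>D. ((\<lambda>s. energy m p \<theta> L u s) has_real_derivative D) (at t) \<and>
            D + \<alpha> * (\<Sum>i<m. integral {0..L} (\<lambda>x. (deriv (\<lambda>y. u i y t powr (real p / 2)) x)\<^sup>2))
              \<le> C' * (1 + (\<Sum>i<m. integral {0..L} (\<lambda>x. u i x t powr (real p - 1 + r))))))"
    using zero_less_one by blast
qed

end
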